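(* Let $\|\cdot\|$ be a weakly unitarily invariant norm on $\mathbb{M}_n$ with $\chi_{\|\cdot\|}=1$. (1) If $\|\cdot\|$ is an $M$-norm, then $\omega(A)\le\|A\|\le\|A\|_\infty$ for all $A\in\mathbb{M}_n$. (2) If $\|\cdot\|$ is an $L$-norm, then $\|A\|_1\le\|A\|\le\omega_*(A)$ for all $A\in\mathbb{M}_n$.
   Context: $\mathbb{M}_n$ is the algebra of complex $n\times n$ matrices with identity $I$; $\|\cdot\|_\infty$ is the operator norm, $\|A\|_1=\mathrm{Tr}(|A|)$ the trace norm, $\omega(A)=\sup\{|\langle x,Ax\rangle|:\|x\|=1\}$ the numerical radius, and $\omega_*(Y)=\sup\{|\mathrm{Tr}(Y^*X)|:\omega(X)\le1\}$ its dual norm. A norm is weakly unitarily invariant if $\|U^*AU\|=\|A\|$ for all $A$ and all unitaries $U$; for such a norm all rank-one orthogonal projections have the same norm, and $\chi_{\|\cdot\|}$ denotes $\|E\|$ for any rank-one orthogonal projection $E$. A norm is an $M$-norm if $\left\|\sum_{i=1}^k C_i^*X_iC_i\right\|\le \max_{i}\|X_i\|$ for all $k$, all $X_i$ and all $C_i$ with $\sum_{i=1}^k C_i^*C_i=I$; it is an $L$-norm if $\sum_{i=1}^k\|C_iXC_i^*\|\le\|X\|$ for all $k$, all $X$ and all $C_i$ with $\sum_{i=1}^k C_i^*C_i=I$. *)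

theory Defs
  imports "HOL-Analysis.Analysis"
begin

text \<open>Matrices in M_n are modelled as complex^'n^'n, with n = CARD('n) arbitrary.\<close>

type_synonym 'n cmat = "complex^'n^'n"

definition cmat_adj :: "'n::finite cmat \<Rightarrow> 'n cmat" where
  "cmat_adj A = (\<chi> i j. cnj (A $ j $ i))"

definition cmat_scale :: "complex \<Rightarrow> 'n::finite cmat \<Rightarrow> 'n cmat" where
  "cmat_scale c A = (\<chi> i j. c * A $ i $ j)"

definition cinner :: "complex^'n::finite \<Rightarrow> complex^'n \<Rightarrow> complex" where
  "cinner x y = (\<Sum>i\<in>UNIV. cnj (x $ i) * y $ i)"

definition unitary :: "'n::finite cmat \<Rightarrow> bool" where
  "unitary U \<longleftrightarrow> cmat_adj U ** U = mat 1 \<and> U ** cmat_adj U = mat 1"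

definition rank_one_proj :: "'n::finite cmat \<Rightarrow> bool" where
  "rank_one_proj E \<longleftrightarrow> (\<exists>x::complex^'n. norm x = 1 \<and> E = (\<chi> i j. x $ i * cnj (x $ j)))"

definition is_matrix_norm :: "('n::finite cmat \<Rightarrow> real) \<Rightarrow> bool" where
  "is_matrix_norm N \<longleftrightarrow>
     (\<forall>A. 0 \<le> N A) \<and> (\<forall>A. N A = 0 \<longleftrightarrow> A = 0) \<and>
     (\<forall>c A. N (cmat_scale c A) = cmod c * N A) \<and>
     (\<forall>A B. N (A + B) \<le> N A + N B)"

definition weakly_unitarily_invariant :: "('n::finite cmat \<Rightarrow> real) \<Rightarrow> bool" where
  "weakly_unitarily_invariant N \<longleftrightarrow>
     is_matrix_norm N \<and> (\<forall>A U. unitary U \<longrightarrow> N (cmat_adj U ** A ** U) = N A)"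

definition M_norm :: "('n::finite cmat \<Rightarrow> real) \<Rightarrow> bool" where
  "M_norm N \<longleftrightarrow> (\<forall>(k::nat) (C::nat \<Rightarrow> 'n cmat) (X::nat \<Rightarrow> 'n cmat).
      (\<Sum>i<k. cmat_adj (C i) ** C i) = mat 1 \<longrightarrow>
      N (\<Sum>i<k. cmat_adj (C i) ** X i ** C i) \<le> (MAX i\<in>{..<k}. N (X i)))"

definition L_norm :: "('n::finite cmat \<Rightarrow> real) \<Rightarrow> bool" where
  "L_norm N \<longleftrightarrow> (\<forall>(k::nat) (C::nat \<Rightarrow> 'n cmat) (X::'n cmat).
      (\<Sum>i<k. cmat_adj (C i) ** C i) = mat 1 \<longrightarrow>
      (\<Sum>i<k. N (C i ** X ** cmat_adj (C i))) \<le> N X)"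

definition op_norm :: "'n::finite cmat \<Rightarrow> real" where
  "op_norm A = Sup {norm (A *v x) | x. norm x = 1}"

definition num_radius :: "'n::finite cmat \<Rightarrow> real" where
  "num_radius A = Sup {cmod (cinner x (A *v x)) | x. norm x = 1}"

definition num_radius_dual :: "'n::finite cmat \<Rightarrow> real" where
  "num_radius_dual Y = Sup {cmod (trace (cmat_adj Y ** X)) | X. num_radius X \<le> 1}"

definition psd :: "'n::finite cmat \<Rightarrow> bool" where
  "psd P \<longleftrightarrow> cmat_adj P = P \<and> (\<forall>x. cinner x (P *v x) \<in> \<real> \<and> 0 \<le> Re (cinner x (P *v x)))"

definition cmat_abs :: "'n::finite cmat \<Rightarrow> 'n cmat" where
  "cmat_abs A = (THE P. psd P \<and> P ** P = cmat_adj A ** A)"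

definition trace_norm :: "'n::finite cmat \<Rightarrow> real" where
  "trace_norm A = Re (trace (cmat_abs A))"

end

theory Submission
  imports Defs
begin

(*
  M-norms: compressing A by the pair P = xx\<^sup>*, I - P gives |<x, Ax>| = N(PAP) \<le> N(A), so
  \<omega> \<le> N.  Compressing by matrix units shows N(D) \<le> 1 for every diagonal contraction D, hence
  N(U) \<le> 1 for every unitary U (diagonalise it).  By the singular value decomposition, a matrix
  with operator norm m is unitarily equivalent to m/2 times a sum of two unitaries, so N \<le> \<parallel>\<cdot>\<parallel>\<^sub>\<infinity>.

  L-norms: the same matrix units give \<Sum>|Y\<^sub>i\<^sub>i| \<le> N(Y), hence Re Tr(V\<^sup>*X) \<le> N(X) for unitary V;
  taking V from the polar decomposition A = V|A| yields \<parallel>A\<parallel>\<^sub>1 = Tr|A| \<le> N(A).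

  The bound N \<le> \<omega>\<^sub>* needs only \<chi> = 1: a real functional that is < 1 on the N-unit ball is < 1 on all
  unimodular multiples of rank-one projections, i.e. has numerical radius \<le> 1, and such functionals
  separate every point outside the (closed, convex) N-unit ball.
*)

lemma cmat_adj_nth[simp]: "cmat_adj A $ i $ j = cnj (A $ j $ i)"
  by (simp add: cmat_adj_def)

lemma cmat_adj_adj[simp]: "cmat_adj (cmat_adj A) = A"
  by (simp add: vec_eq_iff)

lemma cmat_adj_mult: "cmat_adj (A ** B) = cmat_adj B ** cmat_adj A"
  by (simp add: vec_eq_iff matrix_matrix_mult_def mult.commute)

lemma cmat_adj_diff: "cmat_adj (A - B) = cmat_adj A - cmat_adj B"
  by (simp add: vec_eq_iff)

lemma cmat_adj_mat[simp]: "cmat_adj (mat c) = mat (cnj c)"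
  by (simp add: vec_eq_iff mat_def)

lemma cmat_scale_nth[simp]: "cmat_scale c A $ i $ j = c * A $ i $ j"
  by (simp add: cmat_scale_def)

lemma cmat_scale_one[simp]: "cmat_scale 1 A = A"
  by (simp add: vec_eq_iff)

lemma cmat_scale_mult_left: "cmat_scale c A ** B = cmat_scale c (A ** B)"
  by (simp add: vec_eq_iff matrix_matrix_mult_def sum_distrib_left mult.assoc)

lemma cmat_scale_mult_right: "A ** cmat_scale c B = cmat_scale c (A ** B)"
  by (simp add: vec_eq_iff matrix_matrix_mult_def sum_distrib_left algebra_simps)

lemma cmat_scale_minus_one: "cmat_scale (-1) A = - A"
  by (simp add: vec_eq_iff)

lemma scaleR_eq_cmat_scale: "scaleR r A = cmat_scale (complex_of_real r) A"
  by (simp add: vec_eq_iff scaleR_conv_of_real[where 'a=complex])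

lemma trace_cmat_adj: "trace (cmat_adj A) = cnj (trace A)"
  by (simp add: trace_def)

lemma trace_cmat_scale: "trace (cmat_scale c A) = c * trace A"
  by (simp add: trace_def sum_distrib_left)

lemma matrix_add_rdistrib: "((A::'n::finite cmat) + B) ** C = A ** C + B ** C"
  by (simp add: vec_eq_iff matrix_matrix_mult_def sum.distrib algebra_simps)

lemma matrix_diff_ldistrib: "(A::'n::finite cmat) ** (B - C) = A ** B - A ** C"
  by (simp add: vec_eq_iff matrix_matrix_mult_def sum_subtractf algebra_simps)

lemma matrix_diff_rdistrib: "((A::'n::finite cmat) - B) ** C = A ** C - B ** C"
  by (simp add: vec_eq_iff matrix_matrix_mult_def sum_subtractf algebra_simps)

lemma trace_cmat_adj_mult: "trace (cmat_adj Y ** X) = (\<Sum>j\<in>UNIV. \<Sum>i\<in>UNIV. cnj (Y$i$j) * X$i$j)"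
  by (simp add: trace_def matrix_matrix_mult_def)

lemma column_nth [simp]: "column j Q $ i = Q $ i $ j"
  by (simp add: column_def)

lemma column_matrix_mult: "column j (A ** Q) = A *v column j Q"
  by (simp add: vec_eq_iff matrix_matrix_mult_def matrix_vector_mult_def)

lemma columns_eqI: "(\<And>j. column j A = column j B) \<Longrightarrow> A = B"
  by (simp add: vec_eq_iff)

definition matrix_unit :: "'n::finite \<Rightarrow> 'n \<Rightarrow> 'n cmat" where
  "matrix_unit a b = (\<chi> i j. if i = a \<and> j = b then 1 else 0)"

lemma matrix_unit_nth[simp]: "matrix_unit a b $ i $ j = (if i = a \<and> j = b then 1 else 0)"
  by (simp add: matrix_unit_def)

lemma matrix_unit_mult_nth: "(matrix_unit a b ** X) $ i $ j = (if i = a then X$b$j else 0)"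
  by (simp add: matrix_matrix_mult_def if_distrib if_distribR cong: if_cong)

lemma mult_matrix_unit_nth: "(X ** matrix_unit a b) $ i $ j = (if j = b then X$i$a else 0)"
  by (simp add: matrix_matrix_mult_def if_distrib if_distribR cong: if_cong)

lemma cmat_adj_matrix_unit[simp]: "cmat_adj (matrix_unit a b) = matrix_unit b a"
  by (auto simp: vec_eq_iff)

lemma matrix_unit_mult_matrix_unit: "matrix_unit a b ** matrix_unit c e = (if b = c then matrix_unit a e else 0)"
  by (auto simp: vec_eq_iff matrix_unit_mult_nth)

lemma matrix_unit_sandwich: "matrix_unit a b ** X ** matrix_unit c e = cmat_scale (X$b$c) (matrix_unit a e)"
  by (auto simp: vec_eq_iff matrix_unit_mult_nth mult_matrix_unit_nth)

lemma sum_matrix_unit_expansion: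
  "(\<Sum>a\<in>UNIV. \<Sum>b\<in>UNIV. cmat_scale (X$a$b) (matrix_unit a b)) = (X::'n::finite cmat)"
proof -
  have "(\<Sum>b\<in>UNIV. X$a$b * (if i = a \<and> j = b then 1 else 0)) = (if a = i then X$i$j else 0)" for a i j
    by (cases "a = i") (simp_all add: if_distrib sum.delta' cong: if_cong)
  then show ?thesis by (simp add: vec_eq_iff sum_component)
qed

definition diag_mat :: "('n::finite \<Rightarrow> complex) \<Rightarrow> 'n cmat" where
  "diag_mat d = (\<chi> i j. if i = j then d i else 0)"

lemma diag_mat_nth[simp]: "diag_mat d $ i $ j = (if i = j then d i else 0)"
  by (simp add: diag_mat_def)

lemma sum_matrix_unit_diag: "(\<Sum>a\<in>UNIV. cmat_scale (d a) (matrix_unit a a)) = diag_mat d"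
  unfolding vec_eq_iff
proof (intro allI)
  fix i j
  show "(\<Sum>a\<in>UNIV. cmat_scale (d a) (matrix_unit a a)) $ i $ j = diag_mat d $ i $ j"
    by (cases "i = j") (auto simp: if_distrib cong: if_cong intro: sum.neutral)
qed

lemma diag_mat_one: "diag_mat (\<lambda>_. 1) = mat 1"
  by (simp add: vec_eq_iff mat_def)

lemma cmat_adj_diag_mat: "cmat_adj (diag_mat d) = diag_mat (\<lambda>i. cnj (d i))"
  by (auto simp: vec_eq_iff)

lemma cmat_adj_real_diag_mat[simp]:
  "cmat_adj (diag_mat (\<lambda>i. complex_of_real (s i))) = diag_mat (\<lambda>i. complex_of_real (s i))"
  by (simp add: cmat_adj_diag_mat)

lemma diag_mat_mult: "diag_mat d ** diag_mat e = diag_mat (\<lambda>i. d i * e i)"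
proof -
  have "(\<Sum>k\<in>UNIV. (if i = k then d i else 0) * (if k = j then e k else 0))
      = (\<Sum>k\<in>UNIV. if k = i then d i * (if k = j then e k else 0) else 0)" for i j
    by (intro sum.cong) auto
  then show ?thesis by (simp add: vec_eq_iff matrix_matrix_mult_def)
qed

lemma diag_mat_vector_mult: "diag_mat d *v y = (\<chi> i. d i * y $ i)"
  by (simp add: vec_eq_iff matrix_vector_mult_def if_distrib if_distribR sum.delta cong: if_cong)

lemma trace_diag_mat_mult: "trace (diag_mat d ** Y) = (\<Sum>i\<in>UNIV. d i * Y$i$i)"
  by (simp add: trace_def matrix_matrix_mult_def if_distrib if_distribR sum.delta cong: if_cong)

lemma column_mult_diag_mat: "column j (Q ** diag_mat d) = d j *s column j Q"
  by (simp add: vec_eq_iff matrix_matrix_mult_def if_distrib if_distribR sum.delta mult.commute cong: if_cong)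

lemma matrix_units_resolve_identity:
  obtains f :: "nat \<Rightarrow> 'n::finite" where "bij_betw f {..<CARD('n)} UNIV"
    and "(\<Sum>j<CARD('n). cmat_adj (matrix_unit i (f j)) ** matrix_unit i (f j)) = mat 1"
proof -
  obtain f :: "nat \<Rightarrow> 'n" where f: "bij_betw f {..<CARD('n)} UNIV"
    using ex_bij_betw_nat_finite[of "UNIV::'n set"] by (auto simp: atLeast0LessThan)
  have "(\<Sum>j<CARD('n). cmat_adj (matrix_unit i (f j)) ** matrix_unit i (f j))
      = (\<Sum>j<CARD('n). matrix_unit (f j) (f j))"
    by (simp add: matrix_unit_mult_matrix_unit)
  also have "\<dots> = (\<Sum>a\<in>UNIV. matrix_unit a a)" by (rule sum.reindex_bij_betw[OF f])
  also have "\<dots> = mat 1" using sum_matrix_unit_diag[of "\<lambda>_. 1"] by (simp add: diag_mat_one)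
  finally show ?thesis using f that by blast
qed

section \<open>The inner product\<close>

lemma cinner_add_left: "cinner (x + y) z = cinner x z + cinner y z"
  by (simp add: cinner_def sum.distrib algebra_simps)

lemma cinner_add_right: "cinner z (x + y) = cinner z x + cinner z y"
  by (simp add: cinner_def sum.distrib algebra_simps)

lemma cinner_diff_left: "cinner (x - y) z = cinner x z - cinner y z"
  by (simp add: cinner_def sum_subtractf algebra_simps)

lemma cinner_diff_right: "cinner z (x - y) = cinner z x - cinner z y"
  by (simp add: cinner_def sum_subtractf algebra_simps)

lemma cinner_scale_left: "cinner (c *s x) z = cnj c * cinner x z"
  by (simp add: cinner_def sum_distrib_left algebra_simps)

lemma cinner_scale_right: "cinner z (c *s x) = c * cinner z x"
  by (simp add: cinner_def sum_distrib_left algebra_simps)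

lemma cinner_zero[simp]: "cinner 0 x = 0" "cinner x 0 = 0"
  by (simp_all add: cinner_def)

lemma cinner_sum_right: "cinner z (sum f S) = (\<Sum>i\<in>S. cinner z (f i))"
  by (induction S rule: infinite_finite_induct) (auto simp: cinner_add_right)

lemma cinner_commute: "cinner y x = cnj (cinner x y)"
  by (simp add: cinner_def mult.commute)

lemma norm_vec_power2: "(norm (x::complex^'n))^2 = (\<Sum>i\<in>UNIV. (cmod (x$i))^2)"
  by (simp add: norm_vec_def L2_set_def sum_nonneg)

lemma cinner_self: "cinner x x = complex_of_real ((norm x)^2)"
proof -
  have "cinner x x = (\<Sum>i\<in>UNIV. complex_of_real ((cmod (x$i))^2))"
    unfolding cinner_def by (intro sum.cong refl) (subst mult.commute, rule complex_norm_square[symmetric])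
  also have "\<dots> = complex_of_real ((norm x)^2)" by (simp add: norm_vec_power2)
  finally show ?thesis .
qed

lemma cinner_self_eq_0: "cinner x x = 0 \<longleftrightarrow> x = 0"
  by (simp add: cinner_self)

lemma cinner_matrix_right: "cinner x (A *v y) = cinner (cmat_adj A *v x) y"
proof -
  have "cinner x (A *v y) = (\<Sum>i\<in>UNIV. \<Sum>j\<in>UNIV. cnj (x$i) * (A$i$j * y$j))"
    by (simp add: cinner_def matrix_vector_mult_def sum_distrib_left)
  also have "\<dots> = (\<Sum>j\<in>UNIV. \<Sum>i\<in>UNIV. cnj (x$i) * (A$i$j * y$j))" by (rule sum.swap)
  also have "\<dots> = cinner (cmat_adj A *v x) y"
    by (simp add: cinner_def matrix_vector_mult_def sum_distrib_left mult_ac)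
  finally show ?thesis .
qed

lemma cinner_matrix_left: "cinner (A *v x) y = cinner x (cmat_adj A *v y)"
  by (simp add: cinner_matrix_right)

lemma matrix_vector_mult_cscale: "(A::complex^'n^'m) *v (c *s x) = c *s (A *v x)"
proof -
  have "\<And>i. (\<Sum>j\<in>UNIV. A$i$j * (c * x$j)) = c * (\<Sum>j\<in>UNIV. A$i$j * x$j)"
    by (simp add: sum_distrib_left mult.left_commute)
  then show ?thesis by (simp add: vec_eq_iff matrix_vector_mult_def)
qed

lemma cmat_scale_vector_mult: "cmat_scale c A *v x = c *s (A *v x)"
  by (simp add: vec_eq_iff matrix_vector_mult_def sum_distrib_left algebra_simps)

lemma scaleR_eq_vec_cscale: "r *\<^sub>R x = complex_of_real r *s (x::complex^'n::finite)"
  by (simp add: vec_eq_iff scaleR_conv_of_real[where 'a=complex])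

lemma cmod_cinner_le_norm_mult: "cmod (cinner x y) \<le> norm x * norm y"
proof -
  have "cmod (cinner x y) \<le> (\<Sum>i\<in>UNIV. cmod (x$i) * cmod (y$i))"
    unfolding cinner_def by (rule order_trans[OF norm_sum]) (simp add: norm_mult)
  also have "\<dots> \<le> L2_set (\<lambda>i. cmod (x$i)) UNIV * L2_set (\<lambda>i. cmod (y$i)) UNIV"
    using L2_set_mult_ineq[of "\<lambda>i. cmod (x$i)" "\<lambda>i. cmod (y$i)" UNIV] by simp
  finally show ?thesis by (simp add: norm_vec_def)
qed

lemma cinner_quadratic_form_expand:
  "cinner (x + c *s y) (A *v (x + c *s y))
    = cinner x (A *v x) + c * cinner x (A *v y) + cnj c * cinner y (A *v x) + cnj c * c * cinner y (A *v y)"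
  by (simp add: matrix_vector_right_distrib matrix_vector_mult_cscale cinner_add_left cinner_add_right
          cinner_scale_left cinner_scale_right distrib_left)

lemma cinner_self_expand:
  "cinner (x + c *s y) (x + c *s y) = cinner x x + c * cinner x y + cnj c * cinner y x + cnj c * c * cinner y y"
  by (simp add: cinner_add_left cinner_add_right cinner_scale_left cinner_scale_right distrib_left)

lemma cinner_self_normalized:
  assumes "x \<noteq> (0::complex^'n::finite)"
  shows "cinner (complex_of_real (1 / norm x) *s x) (complex_of_real (1 / norm x) *s x) = 1"
proof -
  define r where "r = 1 / norm x"
  have "cinner (complex_of_real r *s x) (complex_of_real r *s x)
      = cnj (complex_of_real r) * (complex_of_real r * cinner x x)"
    by (simp only: cinner_scale_left cinner_scale_right mult.left_commute)
  also have "\<dots> = complex_of_real (r * r * (norm x)^2)" by (simp add: cinner_self)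
  also have "r * r * (norm x)^2 = 1" using assms by (simp add: r_def power2_eq_square)
  finally show ?thesis by (simp add: r_def)
qed

lemma norm_axis_one: "norm (axis i (1::complex) :: complex^'n::finite) = 1"
proof -
  have "(\<Sum>j\<in>UNIV. (cmod (axis i (1::complex) $ j))^2) = (\<Sum>j\<in>(UNIV::'n set). if j = i then 1 else 0)"
    by (intro sum.cong) (auto simp: axis_def)
  then have "(norm (axis i (1::complex) :: complex^'n))^2 = 1"
    by (simp add: norm_vec_power2)
  then show ?thesis by (simp add: power2_eq_1_iff)
qed

lemma cinner_axis_left: "cinner (axis i 1) y = y $ i"
  by (simp add: cinner_def axis_def if_distrib if_distribR sum.delta cong: if_cong)

lemma cinner_axis_matrix: "cinner (axis i 1) (X *v axis j 1) = X $ i $ j"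
  by (simp add: cinner_def matrix_vector_mult_def axis_def if_distrib if_distribR sum.delta cong: if_cong)

lemma inner_cmat_eq_Re_trace: "inner W X = Re (trace (cmat_adj W ** (X::'n::finite cmat)))"
proof -
  have "Re (trace (cmat_adj W ** X)) = (\<Sum>j\<in>UNIV. \<Sum>i\<in>UNIV. inner (W$i$j) (X$i$j))"
    by (simp add: trace_cmat_adj_mult inner_complex_def)
  also have "\<dots> = (\<Sum>i\<in>UNIV. \<Sum>j\<in>UNIV. inner (W$i$j) (X$i$j))" by (rule sum.swap)
  also have "\<dots> = inner W X" by (simp add: inner_vec_def)
  finally show ?thesis by simp
qed

definition proj :: "complex^'n::finite \<Rightarrow> 'n cmat" where
  "proj x = (\<chi> i j. x $ i * cnj (x $ j))"

lemma proj_nth[simp]: "proj x $ i $ j = x $ i * cnj (x $ j)"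
  by (simp add: proj_def)

lemma cmat_adj_proj[simp]: "cmat_adj (proj x) = proj x"
  by (simp add: vec_eq_iff mult.commute)

lemma proj_idem: assumes "norm x = 1" shows "proj x ** proj x = proj x"
proof -
  have "(\<Sum>k\<in>UNIV. cnj (x$k) * x$k) = 1"
    using cinner_self[of x] assms by (simp add: cinner_def)
  moreover have "\<And>i j. (\<Sum>k\<in>UNIV. x$i * cnj (x$k) * (x$k * cnj (x$j)))
     = x$i * cnj (x$j) * (\<Sum>k\<in>UNIV. cnj (x$k) * x$k)"
    by (simp add: sum_distrib_left mult_ac)
  ultimately have "\<And>i j. (\<Sum>k\<in>UNIV. x$i * cnj (x$k) * (x$k * cnj (x$j))) = x$i * cnj (x$j)"
    by simp
  then show ?thesis by (simp add: vec_eq_iff matrix_matrix_mult_def)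
qed

lemma proj_sandwich: "proj x ** A ** proj x = cmat_scale (cinner x (A *v x)) (proj x)"
proof -
  have e3: "cinner x (A *v x) = (\<Sum>k\<in>UNIV. \<Sum>l\<in>UNIV. cnj (x$k) * A$k$l * x$l)"
    by (simp add: cinner_def matrix_vector_mult_def sum_distrib_left mult.assoc)
  have "\<And>i j. (\<Sum>l\<in>UNIV. (\<Sum>k\<in>UNIV. x$i * cnj (x$k) * A$k$l) * (x$l * cnj (x$j)))
      = x$i * cnj (x$j) * (\<Sum>l\<in>UNIV. \<Sum>k\<in>UNIV. cnj (x$k) * A$k$l * x$l)"
    by (simp add: sum_distrib_left sum_distrib_right mult_ac)
  also have "\<And>i j. x$i * cnj (x$j) * (\<Sum>l\<in>UNIV. \<Sum>k\<in>UNIV. cnj (x$k) * A$k$l * x$l)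
     = cinner x (A *v x) * (x$i * cnj (x$j))"
    unfolding e3 by (subst sum.swap) (simp add: mult.commute)
  finally show ?thesis by (simp add: vec_eq_iff matrix_matrix_mult_def)
qed

lemma trace_mult_proj: "trace (B ** proj x) = cinner x (B *v x)"
proof -
  have "trace (B ** proj x) = (\<Sum>j\<in>UNIV. \<Sum>k\<in>UNIV. B$j$k * (x$k * cnj (x$j)))"
    by (simp add: trace_def matrix_matrix_mult_def)
  also have "\<dots> = cinner x (B *v x)"
    by (simp add: cinner_def matrix_vector_mult_def sum_distrib_left mult_ac)
  finally show ?thesis .
qed

lemma rank_one_proj_proj: "norm x = 1 \<Longrightarrow> rank_one_proj (proj x)"
  unfolding rank_one_proj_def proj_def by blast

lemma proj_axis_one: "proj (axis a 1) = matrix_unit a a"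
  by (auto simp: vec_eq_iff axis_def)

section \<open>Unitary matrices\<close>

lemma unitary_cmat_adj: "unitary U \<Longrightarrow> unitary (cmat_adj U)"
  by (simp add: unitary_def)

lemma unitary_mult: "unitary U \<Longrightarrow> unitary V \<Longrightarrow> unitary (U ** V)"
proof -
  assume u: "unitary U" and v: "unitary V"
  have "cmat_adj (U ** V) ** (U ** V) = cmat_adj V ** (cmat_adj U ** U) ** V"
    by (simp add: cmat_adj_mult matrix_mul_assoc)
  also have "\<dots> = mat 1" using u v by (simp add: unitary_def)
  finally show ?thesis unfolding unitary_def using matrix_left_right_inverse by blast
qed

lemma unitary_iff_adj_mult: "unitary U \<longleftrightarrow> cmat_adj U ** U = mat 1"
  unfolding unitary_def using matrix_left_right_inverse by blast

lemma unitary_conj_inverse: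
  assumes "unitary Q" "cmat_adj Q ** M ** Q = D"
  shows "M = Q ** D ** cmat_adj Q"
proof -
  have "Q ** D ** cmat_adj Q = (Q ** cmat_adj Q) ** M ** (Q ** cmat_adj Q)"
    by (simp add: assms(2)[symmetric] matrix_mul_assoc)
  then show ?thesis using assms(1) by (simp add: unitary_def)
qed

lemma mult_unitary_eqD: "unitary Q \<Longrightarrow> A ** Q = B \<Longrightarrow> A = B ** cmat_adj Q"
  by (metis matrix_mul_assoc matrix_mul_rid unitary_def)

lemma cmat_adj_mult_nth_column: "(cmat_adj Q ** Q) $ i $ j = cinner (column i Q) (column j Q)"
  by (simp add: matrix_matrix_mult_def cinner_def)

lemma unitary_columns_orthonormal: "unitary Q \<Longrightarrow> cinner (column i Q) (column j Q) = (if i = j then 1 else 0)"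
  using cmat_adj_mult_nth_column[of Q i j] by (simp add: unitary_def mat_def)

lemma unitary_column_norm: assumes "unitary Q" shows "norm (column i Q) = 1"
proof -
  have "complex_of_real ((norm (column i Q))^2) = 1"
    using unitary_columns_orthonormal[OF assms, of i i] by (simp add: cinner_self)
  then have "(norm (column i Q))^2 = 1" using of_real_eq_1_iff by blast
  then show ?thesis using norm_ge_zero[of "column i Q"] power2_eq_1_iff[of "norm (column i Q)"] by linarith
qed

lemma unitary_of_orthonormal_columns:
  assumes "\<forall>i j. cinner (e i) (e j) = (if i = j then 1 else 0)"
  shows "unitary ((\<chi> i j. e j $ i) :: 'n::finite cmat)" "column j (\<chi> i j. e j $ i) = e j"
proof -
  have "(cmat_adj (\<chi> i j. e j $ i) ** (\<chi> i j. e j $ i)) $ i $ j = cinner (e i) (e j)" for i j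
    by (simp add: cmat_adj_mult_nth_column column_def vec_eq_iff)
  then have "cmat_adj ((\<chi> i j. e j $ i) :: 'n cmat) ** (\<chi> i j. e j $ i) = mat 1"
    using assms by (simp add: vec_eq_iff mat_def)
  then show "unitary ((\<chi> i j. e j $ i) :: 'n::finite cmat)" by (simp add: unitary_iff_adj_mult)
  show "column j (\<chi> i j. e j $ i) = e j" by (simp add: vec_eq_iff)
qed

lemma unitary_diag_mat_iff: "unitary (diag_mat d) \<longleftrightarrow> (\<forall>i. cmod (d i) = 1)"
proof -
  have "unitary (diag_mat d) \<longleftrightarrow> diag_mat (\<lambda>i. cnj (d i) * d i) = mat 1"
    by (simp add: unitary_iff_adj_mult cmat_adj_diag_mat diag_mat_mult)
  also have "\<dots> \<longleftrightarrow> (\<forall>i. cnj (d i) * d i = 1)"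
    by (auto simp: vec_eq_iff mat_def)
  also have "\<dots> \<longleftrightarrow> (\<forall>i. cmod (d i) = 1)"
  proof -
    have "cnj z * z = 1 \<longleftrightarrow> cmod z = 1" for z :: complex
    proof -
      have h: "cnj z * z = complex_of_real ((cmod z)^2)" using complex_norm_square[of z] by (simp only: mult.commute)
      have "cnj z * z = 1 \<longleftrightarrow> (cmod z)^2 = 1" unfolding h by (rule of_real_eq_1_iff)
      also have "\<dots> \<longleftrightarrow> cmod z = 1" using norm_ge_zero[of z] power2_eq_1_iff[of "cmod z"] by linarith
      finally show ?thesis .
    qed
    then show ?thesis by simp
  qed
  finally show ?thesis .
qed

section \<open>The spectral theorem for normal matrices\<close>

definition csubspace :: "(complex^'n::finite) set \<Rightarrow> bool" where
  "csubspace S \<longleftrightarrow>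
     0 \<in> S \<and> (\<forall>x\<in>S. \<forall>y\<in>S. x + y \<in> S) \<and> (\<forall>c. \<forall>x\<in>S. c *s x \<in> S)"

lemma csubspace_add: "csubspace S \<Longrightarrow> x \<in> S \<Longrightarrow> y \<in> S \<Longrightarrow> x + y \<in> S"
  unfolding csubspace_def by blast

lemma csubspace_cscale: "csubspace S \<Longrightarrow> x \<in> S \<Longrightarrow> c *s x \<in> S"
  unfolding csubspace_def by blast

lemma csubspace_zero: "csubspace S \<Longrightarrow> 0 \<in> S"
  unfolding csubspace_def by blast

lemma csubspace_subspace: "csubspace S \<Longrightarrow> subspace S"
  unfolding csubspace_def subspace_def by (simp add: scaleR_eq_vec_cscale)

lemma csubspace_diff: "csubspace S \<Longrightarrow> x \<in> S \<Longrightarrow> y \<in> S \<Longrightarrow> x - y \<in> S"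
  using csubspace_subspace subspace_diff by blast

lemma hermitian_cinner: "cmat_adj H = H \<Longrightarrow> cinner x (H *v y) = cinner (H *v x) y"
  by (metis cinner_matrix_right)

lemma hermitian_cinner_real: "cmat_adj H = H \<Longrightarrow> cinner x (H *v x) = complex_of_real (Re (cinner x (H *v x)))"
proof -
  assume h: "cmat_adj H = H"
  have "cnj (cinner x (H *v x)) = cinner x (H *v x)"
    using hermitian_cinner[OF h, of x x] cinner_commute[of "H *v x" x] by simp
  then show ?thesis by (simp add: complex_eq_iff)
qed

lemma continuous_on_quadratic_form: "continuous_on S (\<lambda>x. Re (cinner x (H *v x)))"
  unfolding cinner_def matrix_vector_mult_def
  by (intro continuous_intros continuous_on_component continuous_on_id)

lemma quadratic_nonpos_imp_zero:
  fixes a b :: real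
  assumes "\<forall>t. 2 * t * a + t^2 * b \<le> 0" "0 \<le> a"
  shows "a = 0"
proof (rule ccontr)
  assume "a \<noteq> 0"
  then have a: "a > 0" using assms(2) by simp
  define t where "t = a / (\<bar>b\<bar> + 1)"
  have t: "t > 0" using a by (simp add: t_def)
  have "t * \<bar>b\<bar> < a" using a by (simp add: t_def field_simps)
  then have "t^2 * \<bar>b\<bar> < t * a" using t by (simp add: power2_eq_square mult.assoc)
  moreover have "- (t^2 * \<bar>b\<bar>) \<le> t^2 * b" using mult_left_mono[of "-\<bar>b\<bar>" b "t^2"] by simp
  moreover have "0 < t * a" using t a by simp
  ultimately have "2 * t * a + t^2 * b > 0" by linarith
  then show False using assms(1) by (meson not_le)
qed

(* Perturbing x to x + t y with y = Hx - f(x) x changes f(z) - f(x)|z|\<^sup>2 by 2t|y|\<^sup>2 to first order,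
   so maximality forces y = 0. *)
lemma hermitian_max_quadratic_form_eigenvector:
  fixes H :: "'n::finite cmat"
  defines "f \<equiv> \<lambda>x. Re (cinner x (H *v x))"
  assumes herm: "cmat_adj H = H" and S: "csubspace S" and inv: "\<forall>x\<in>S. H *v x \<in> S"
    and xS: "x \<in> S" and nx: "norm x = 1"
    and key: "\<And>z. z \<in> S \<Longrightarrow> f z \<le> f x * (norm z)^2"
  shows "H *v x = complex_of_real (f x) *s x"
proof -
  define l where "l = f x"
  define y where "y = H *v x - complex_of_real l *s x"
  have yS: "y \<in> S" unfolding y_def using S xS inv csubspace_diff unfolding csubspace_def by blast
  have hx: "cinner x (H *v x) = complex_of_real l"
    using hermitian_cinner_real[OF herm, of x] by (simp add: l_def f_def)
  have cxx: "cinner x x = 1" using nx by (simp add: cinner_self)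
  define a where "a = cinner y (H *v x)"
  define b where "b = cinner y x"
  have a_eq: "a = complex_of_real ((norm y)^2) + complex_of_real l * b"
  proof -
    have "H *v x = y + complex_of_real l *s x" by (simp add: y_def)
    then have "a = cinner y (y + complex_of_real l *s x)" by (simp add: a_def)
    then show ?thesis by (simp add: cinner_add_right cinner_scale_right cinner_self b_def)
  qed
  have Re_real_mult: "Re (complex_of_real t * w) = t * Re w" for t w by simp
  have t_ineq: "2 * t * (norm y)^2 + t^2 * (f y - l * (norm y)^2) \<le> 0" for t :: real
  proof -
    define c where "c = complex_of_real t"
    define z where "z = x + c *s y"
    have zS: "z \<in> S" unfolding z_def using S xS yS unfolding csubspace_def by blast
    have cc: "cnj c = c" by (simp add: c_def)
    have xHy: "cinner x (H *v y) = cnj a"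
      unfolding a_def hermitian_cinner[OF herm, of x y] by (rule cinner_commute)
    have "cinner z (H *v z) = complex_of_real l + c * cnj a + c * a + c * c * cinner y (H *v y)"
      unfolding z_def cinner_quadratic_form_expand cc xHy hx a_def ..
    then have "f z = l + t * Re (cnj a) + t * Re a + (t * t) * f y"
      by (simp add: f_def c_def Re_real_mult flip: of_real_mult)
    then have fz: "f z = l + 2 * t * Re a + t^2 * f y"
      by (simp add: power2_eq_square)
    have "cinner z z = 1 + c * cnj b + c * b + c * c * complex_of_real ((norm y)^2)"
      unfolding z_def cinner_self_expand cc cxx b_def cinner_commute[of x y] cinner_self[of y] ..
    then have "complex_of_real ((norm z)^2) = 1 + c * cnj b + c * b + c * c * complex_of_real ((norm y)^2)"
      by (simp only: cinner_self)
    then have "(norm z)^2 = Re (1 + c * cnj b + c * b + c * c * complex_of_real ((norm y)^2))"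
      by (metis Re_complex_of_real)
    then have nz: "(norm z)^2 = 1 + 2 * t * Re b + t^2 * (norm y)^2"
      by (simp add: c_def Re_real_mult power2_eq_square flip: of_real_mult)
    have "f z \<le> l * (norm z)^2" using key[OF zS, folded l_def] .
    then have "l + 2 * t * Re a + t^2 * f y \<le> l * (1 + 2 * t * Re b + t^2 * (norm y)^2)"
      using fz nz by simp
    moreover have "Re a = (norm y)^2 + l * Re b" using a_eq by simp
    ultimately show ?thesis by (simp add: algebra_simps)
  qed
  have "(norm y)^2 = 0"
    by (rule quadratic_nonpos_imp_zero[of "(norm y)^2" "f y - l * (norm y)^2"]) (use t_ineq in auto)
  then show ?thesis by (simp add: y_def l_def)
qed

lemma hermitian_invariant_subspace_eigenvector:
  fixes H :: "'n::finite cmat"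
  assumes herm: "cmat_adj H = H" and S: "csubspace S" and inv: "\<forall>x\<in>S. H *v x \<in> S"
    and ne: "\<exists>x\<in>S. x \<noteq> 0"
  shows "\<exists>x\<in>S. x \<noteq> 0 \<and> (\<exists>c. H *v x = c *s x)"
proof -
  define f where "f = (\<lambda>x. Re (cinner x (H *v x)))"
  define K where "K = S \<inter> sphere 0 1"
  have "compact K" unfolding K_def
    by (intro closed_Int_compact closed_subspace csubspace_subspace S compact_sphere)
  moreover have "K \<noteq> {}"
  proof -
    obtain x0 where "x0 \<in> S" "x0 \<noteq> 0" using ne by blast
    then have "(1 / norm x0) *\<^sub>R x0 \<in> K"
      using csubspace_subspace[OF S] by (simp add: K_def subspace_scale)
    then show ?thesis by blast
  qed
  moreover have "continuous_on K f" unfolding f_def by (rule continuous_on_quadratic_form)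
  ultimately obtain x where xK: "x \<in> K" and xmax: "\<forall>y\<in>K. f y \<le> f x"
    using continuous_attains_sup by blast
  have xS: "x \<in> S" and nx: "norm x = 1" using xK by (auto simp: K_def)
  have fhom: "f (r *\<^sub>R z) = r^2 * f z" for r z
    by (simp add: f_def scaleR_eq_vec_cscale cinner_scale_left matrix_vector_mult_cscale
        cinner_scale_right power2_eq_square)
  have "f z \<le> f x * (norm z)^2" if "z \<in> S" for z
  proof (cases "z = 0")
    case True then show ?thesis by (simp add: f_def)
  next
    case False
    then have "(1 / norm z) *\<^sub>R z \<in> K"
      using csubspace_subspace[OF S] that by (simp add: K_def subspace_scale)
    then have "f ((1 / norm z) *\<^sub>R z) \<le> f x" using xmax by blast
    then have "f z / (norm z)^2 \<le> f x" by (simp add: fhom power_divide)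
    then show ?thesis using False by (simp add: divide_le_eq mult.commute)
  qed
  then have "H *v x = complex_of_real (f x) *s x"
    unfolding f_def by (rule hermitian_max_quadratic_form_eigenvector[OF herm S inv xS nx])
  moreover have "x \<noteq> 0" using nx by auto
  ultimately show ?thesis using xS by blast
qed

definition normal_matrix :: "'n::finite cmat \<Rightarrow> bool" where
  "normal_matrix M \<longleftrightarrow> M ** cmat_adj M = cmat_adj M ** M"

lemma normal_matrix_cinner_adj:
  assumes "normal_matrix M"
  shows "cinner (cmat_adj M *v x) (cmat_adj M *v x) = cinner (M *v x) (M *v x)"
proof -
  have "cinner (cmat_adj M *v x) (cmat_adj M *v x) = cinner x (M *v (cmat_adj M *v x))"
    by (simp add: cinner_matrix_left)
  also have "\<dots> = cinner x ((M ** cmat_adj M) *v x)" by (simp add: matrix_vector_mul_assoc)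
  also have "\<dots> = cinner x ((cmat_adj M ** M) *v x)" using assms by (simp add: normal_matrix_def)
  also have "\<dots> = cinner x (cmat_adj M *v (M *v x))" by (simp add: matrix_vector_mul_assoc)
  also have "\<dots> = cinner (M *v x) (M *v x)" by (simp add: cinner_matrix_right)
  finally show ?thesis .
qed

lemma normal_matrix_adj_eigenvector:
  assumes "normal_matrix M" "M *v x = c *s x"
  shows "cmat_adj M *v x = cnj c *s x"
proof -
  define X where "X = cinner x x"
  have 1: "cinner (cmat_adj M *v x) (cmat_adj M *v x) = cnj c * c * X"
    using normal_matrix_cinner_adj[OF assms(1), of x] assms(2)
    by (simp add: cinner_scale_left cinner_scale_right X_def)
  have 2: "cinner (cmat_adj M *v x) x = c * X"
    by (simp add: cinner_matrix_left assms(2) cinner_scale_right X_def)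
  have 3: "cinner x (cmat_adj M *v x) = cnj c * X"
    using cinner_matrix_left[of M x x] assms(2) by (simp add: cinner_scale_left X_def)
  have "cinner (cmat_adj M *v x - cnj c *s x) (cmat_adj M *v x - cnj c *s x) = 0"
    by (simp add: cinner_diff_left cinner_diff_right cinner_scale_left cinner_scale_right 1 2 3 X_def[symmetric]
        algebra_simps)
  then show ?thesis by (simp add: cinner_self_eq_0)
qed

(* M = H\<^sub>1 + iH\<^sub>2 with commuting Hermitian H\<^sub>1, H\<^sub>2: an eigenspace of H\<^sub>1 inside S is invariant
   under H\<^sub>2, and an eigenvector of H\<^sub>2 there is a common eigenvector. *)
lemma normal_invariant_subspace_eigenvector:
  fixes M :: "'n::finite cmat"
  assumes nM: "normal_matrix M" and S: "csubspace S" and inv1: "\<forall>x\<in>S. M *v x \<in> S"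
    and inv2: "\<forall>x\<in>S. cmat_adj M *v x \<in> S" and ne: "\<exists>x\<in>S. x \<noteq> 0"
  shows "\<exists>x\<in>S. x \<noteq> 0 \<and> (\<exists>c. M *v x = c *s x)"
proof -
  define H1 where "H1 = cmat_scale (1/2) (M + cmat_adj M)"
  define H2 where "H2 = cmat_scale (-\<i>/2) (M - cmat_adj M)"
  have h1: "cmat_adj H1 = H1" by (simp add: H1_def vec_eq_iff algebra_simps)
  have h2: "cmat_adj H2 = H2" by (simp add: H2_def vec_eq_iff algebra_simps)
  have MH: "M *v x = H1 *v x + \<i> *s (H2 *v x)" for x
  proof -
    have "M = H1 + cmat_scale \<i> H2"
      by (simp add: H1_def H2_def vec_eq_iff algebra_simps)
    then show ?thesis by (metis matrix_vector_mult_add_rdistrib cmat_scale_vector_mult)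
  qed
  have H1v: "H1 *v x = (1/2) *s (M *v x + cmat_adj M *v x)" for x
    by (simp add: H1_def cmat_scale_vector_mult matrix_vector_mult_add_rdistrib)
  have H2v: "H2 *v x = (-\<i>/2) *s (M *v x - cmat_adj M *v x)" for x
    by (simp add: H2_def cmat_scale_vector_mult matrix_vector_mult_diff_rdistrib)
  have c1: "H1 ** M = M ** H1"
    using nM by (simp add: H1_def normal_matrix_def cmat_scale_mult_left cmat_scale_mult_right
        matrix_add_rdistrib matrix_add_ldistrib)
  have c2: "H1 ** cmat_adj M = cmat_adj M ** H1"
    using nM by (simp add: H1_def normal_matrix_def cmat_scale_mult_left cmat_scale_mult_right
        matrix_add_rdistrib matrix_add_ldistrib)
  have S1: "\<forall>x\<in>S. H1 *v x \<in> S"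
    using S inv1 inv2 by (simp add: H1v csubspace_add csubspace_cscale)
  obtain x1 mu where x1: "x1 \<in> S" "x1 \<noteq> 0" "H1 *v x1 = mu *s x1"
    using hermitian_invariant_subspace_eigenvector[OF h1 S S1 ne] by blast
  define S' where "S' = {y\<in>S. H1 *v y = mu *s y}"
  have cs: "csubspace S'"
    unfolding csubspace_def S'_def using S
    by (auto simp: csubspace_zero csubspace_add csubspace_cscale matrix_vector_right_distrib matrix_vector_mult_cscale
        vec_eq_iff distrib_left mult.left_commute)
  have invM: "M *v y \<in> S'" if "y \<in> S'" for y
  proof -
    have "H1 *v (M *v y) = M *v (H1 *v y)" by (simp add: matrix_vector_mul_assoc c1)
    then show ?thesis using that inv1 by (simp add: S'_def matrix_vector_mult_cscale)
  qed
  have invMa: "cmat_adj M *v y \<in> S'" if "y \<in> S'" for y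
  proof -
    have "H1 *v (cmat_adj M *v y) = cmat_adj M *v (H1 *v y)" by (simp add: matrix_vector_mul_assoc c2)
    then show ?thesis using that inv2 by (simp add: S'_def matrix_vector_mult_cscale)
  qed
  have S2: "\<forall>x\<in>S'. H2 *v x \<in> S'"
    using cs invM invMa by (simp add: H2v csubspace_diff csubspace_cscale)
  have ne2: "\<exists>x\<in>S'. x \<noteq> 0" using x1 by (auto simp: S'_def)
  obtain x2 nu where x2: "x2 \<in> S'" "x2 \<noteq> 0" "H2 *v x2 = nu *s x2"
    using hermitian_invariant_subspace_eigenvector[OF h2 cs S2 ne2] by blast
  have hM: "M *v x2 = (mu + \<i> * nu) *s x2"
    using x2 by (simp add: MH S'_def vec_eq_iff algebra_simps)
  have "x2 \<in> S" using x2(1) by (simp add: S'_def)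
  then show ?thesis using hM x2(2) by blast
qed

definition orthonormal_set :: "(complex^'n::finite) set \<Rightarrow> bool" where
  "orthonormal_set B \<longleftrightarrow>
     (\<forall>b\<in>B. cinner b b = 1) \<and> (\<forall>a\<in>B. \<forall>b\<in>B. a \<noteq> b \<longrightarrow> cinner a b = 0)"

lemma orthogonal_to_small_set_exists:
  fixes B :: "(complex^'n::finite) set"
  assumes fin: "finite B" and on: "orthonormal_set B" and card: "card B < CARD('n)"
  shows "\<exists>v. v \<noteq> 0 \<and> (\<forall>b\<in>B. cinner b v = 0)"
proof -
  have "vec.span B \<noteq> UNIV"
  proof
    assume "vec.span B = UNIV"
    then have "vec.dim (UNIV::(complex^'n) set) \<le> card B" using vec.dim_le_card[of UNIV B] fin by auto
    then show False using card by (simp add: vec.dim_UNIV card_cart_basis)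
  qed
  then obtain v where v: "v \<notin> vec.span B" by blast
  define w where "w = v - (\<Sum>b\<in>B. cinner b v *s b)"
  have orth: "cinner b' w = 0" if b': "b' \<in> B" for b'
  proof -
    have "cinner b' (\<Sum>b\<in>B. cinner b v *s b) = (\<Sum>b\<in>B. cinner b v * cinner b' b)"
      by (simp add: cinner_sum_right cinner_scale_right)
    also have "\<dots> = (\<Sum>b\<in>B. if b = b' then cinner b' v else 0)"
      by (intro sum.cong refl) (use on b' in \<open>auto simp: orthonormal_set_def\<close>)
    also have "\<dots> = cinner b' v" using b' fin by simp
    finally show ?thesis by (simp add: w_def cinner_diff_right)
  qed
  have "w \<noteq> 0"
  proof
    assume "w = 0"
    then have "v = (\<Sum>b\<in>B. cinner b v *s b)" by (simp add: w_def)
    moreover have "(\<Sum>b\<in>B. cinner b v *s b) \<in> vec.span B"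
      by (intro vec.span_sum vec.span_scale vec.span_base)
    ultimately show False using v by simp
  qed
  then show ?thesis using orth by blast
qed

lemma extend_to_card:
  assumes "P B0" "finite B0" "card B0 \<le> n"
    and step: "\<And>B. P B \<Longrightarrow> finite B \<Longrightarrow> B0 \<subseteq> B \<Longrightarrow> card B < n
      \<Longrightarrow> \<exists>v. v \<notin> B \<and> P (insert v B)"
  shows "\<exists>B. P B \<and> finite B \<and> B0 \<subseteq> B \<and> card B = n"
proof -
  have "\<exists>B'. P B' \<and> finite B' \<and> B0 \<subseteq> B' \<and> card B' = n"
    if "P B" "finite B" "B0 \<subseteq> B" "card B \<le> n" for B
    using that
  proof (induction "n - card B" arbitrary: B)
    case 0
    then show ?case by auto
  next
    case (Suc k)
    then obtain v where v: "v \<notin> B" "P (insert v B)" using step by force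
    have "k = n - card (insert v B)" "card (insert v B) \<le> n"
      using Suc.hyps(2) Suc.prems v(1) by auto
    then show ?case
      using Suc.hyps(1)[of "insert v B"] Suc.prems v(2) by blast
  qed
  then show ?thesis using assms by blast
qed

lemma orthonormal_set_extend_one:
  fixes B :: "(complex^'n::finite) set"
  assumes "finite B" "orthonormal_set B" "card B < CARD('n)"
  shows "\<exists>v. v \<notin> B \<and> orthonormal_set (insert v B)"
proof -
  obtain x where x: "x \<noteq> 0" "\<forall>b\<in>B. cinner b x = 0" using orthogonal_to_small_set_exists[OF assms] by blast
  define v where "v = complex_of_real (1 / norm x) *s x"
  have vv: "cinner v v = 1" using cinner_self_normalized[OF x(1)] by (simp add: v_def)
  have bv: "cinner b v = 0" if "b \<in> B" for b using x(2) that by (simp add: v_def cinner_scale_right)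
  have vb: "cinner v b = 0" if "b \<in> B" for b using bv[OF that] cinner_commute[of v b] by simp
  have "v \<notin> B" using vv bv by force
  moreover have "orthonormal_set (insert v B)" using assms(2) vv bv vb unfolding orthonormal_set_def by auto
  ultimately show ?thesis by blast
qed

lemma orthonormal_family_of_bij:
  assumes "orthonormal_set B" "bij_betw e UNIV B"
  shows "\<forall>i j. cinner (e i) (e j) = (if i = j then 1 else 0)"
  using assms unfolding orthonormal_set_def bij_betw_def inj_def by (metis rangeI)

lemma normal_orthonormal_eigenbasis:
  fixes M :: "'n::finite cmat"
  assumes nM: "normal_matrix M"
  shows "\<exists>B. orthonormal_set B \<and> (\<forall>b\<in>B. \<exists>c. M *v b = c *s b) \<and>
    finite B \<and> card B = CARD('n)"
proof -
  let ?P = "\<lambda>B. orthonormal_set B \<and> (\<forall>b\<in>B. \<exists>c. M *v b = c *s b)"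
  have "\<exists>B. ?P B \<and> finite B \<and> {} \<subseteq> B \<and> card B = CARD('n)"
  proof (rule extend_to_card)
    show "?P {}" by (simp add: orthonormal_set_def)
  next
    fix B assume PB: "?P B" and fin: "finite B" and cB: "card B < CARD('n)"
    define S where "S = {x. \<forall>b\<in>B. cinner b x = 0}"
    have cs: "csubspace S" by (auto simp: S_def csubspace_def cinner_add_right cinner_scale_right)
    have inv1: "\<forall>x\<in>S. M *v x \<in> S"
    proof (intro ballI)
      fix x assume x: "x \<in> S"
      { fix b assume b: "b \<in> B"
        then obtain c where c: "M *v b = c *s b" using PB by blast
        have "cinner b (M *v x) = cinner (cmat_adj M *v b) x" by (rule cinner_matrix_right)
        also have "\<dots> = 0" using normal_matrix_adj_eigenvector[OF nM c] x b by (simp add: S_def cinner_scale_left)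
        finally have "cinner b (M *v x) = 0" . }
      then show "M *v x \<in> S" by (simp add: S_def)
    qed
    have inv2: "\<forall>x\<in>S. cmat_adj M *v x \<in> S"
    proof (intro ballI)
      fix x assume x: "x \<in> S"
      { fix b assume b: "b \<in> B"
        then obtain c where c: "M *v b = c *s b" using PB by blast
        have "cinner b (cmat_adj M *v x) = cinner (M *v b) x" using cinner_matrix_right[of b "cmat_adj M" x] by simp
        also have "\<dots> = 0" using c x b by (simp add: S_def cinner_scale_left)
        finally have "cinner b (cmat_adj M *v x) = 0" . }
      then show "cmat_adj M *v x \<in> S" by (simp add: S_def)
    qed
    have ne: "\<exists>x\<in>S. x \<noteq> 0" using orthogonal_to_small_set_exists[OF fin _ cB] PB by (auto simp: S_def)
    obtain x c where x: "x \<in> S" "x \<noteq> 0" "M *v x = c *s x"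
      using normal_invariant_subspace_eigenvector[OF nM cs inv1 inv2 ne] by blast
    define v where "v = complex_of_real (1 / norm x) *s x"
    have vv: "cinner v v = 1" using cinner_self_normalized[OF x(2)] by (simp add: v_def)
    have vS: "v \<in> S" using cs x(1) by (simp add: v_def csubspace_cscale)
    have Mv: "M *v v = c *s v" using x(3) by (simp add: v_def matrix_vector_mult_cscale vec_eq_iff mult.left_commute)
    have vB: "v \<notin> B" using vS vv by (auto simp: S_def)
    have vb: "cinner v b = 0" if "b \<in> B" for b
      using vS that cinner_commute[of v b] by (simp add: S_def)
    have "orthonormal_set (insert v B)"
      using PB vv vS vb unfolding orthonormal_set_def S_def by auto
    then show "\<exists>v. v \<notin> B \<and> ?P (insert v B)" using vB Mv PB by blast
  qed simp_all
  then show ?thesis by blast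
qed

lemma normal_unitarily_diagonalizable:
  fixes M :: "'n::finite cmat"
  assumes nM: "normal_matrix M"
  shows "\<exists>Q d. unitary Q \<and> cmat_adj Q ** M ** Q = diag_mat d \<and>
    (\<forall>j. M *v column j Q = d j *s column j Q)"
proof -
  obtain B where B: "orthonormal_set B" "\<forall>b\<in>B. \<exists>c. M *v b = c *s b" "finite B" "card B = CARD('n)"
    using normal_orthonormal_eigenbasis[OF nM] by blast
  obtain g :: "'n \<Rightarrow> complex^'n" where g: "bij_betw g UNIV B"
    using finite_same_card_bij[of "UNIV::'n set" B] B by auto
  define Q :: "'n cmat" where "Q = (\<chi> i j. g j $ i)"
  have uQ: "unitary Q" and colQ: "column j Q = g j" for j
    using unitary_of_orthonormal_columns[OF orthonormal_family_of_bij[OF B(1) g]] by (simp_all add: Q_def)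
  define d where "d = (\<lambda>j. SOME c. M *v g j = c *s g j)"
  have hd: "M *v g j = d j *s g j" for j
    unfolding d_def using B(2) g by (metis (mono_tags, lifting) bij_betwE UNIV_I someI_ex)
  have "M ** Q = Q ** diag_mat d"
    by (rule columns_eqI) (simp add: column_matrix_mult[of _ M] column_mult_diag_mat colQ hd)
  then have "cmat_adj Q ** M ** Q = diag_mat d"
    using uQ by (metis matrix_mul_assoc matrix_mul_lid unitary_def)
  then show ?thesis using uQ hd colQ by metis
qed

lemma unitary_normal_matrix: "unitary U \<Longrightarrow> normal_matrix U"
  by (simp add: unitary_def normal_matrix_def)

lemma unitary_unitarily_diagonalizable:
  assumes "unitary U"
  shows "\<exists>Q d. unitary Q \<and> cmat_adj Q ** U ** Q = diag_mat d \<and> (\<forall>i. cmod (d i) = 1)"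
proof -
  obtain Q d where Q: "unitary Q" "cmat_adj Q ** U ** Q = diag_mat d"
    using normal_unitarily_diagonalizable[OF unitary_normal_matrix[OF assms]] by blast
  have "unitary (cmat_adj Q ** U ** Q)"
    using Q(1) assms by (intro unitary_mult unitary_cmat_adj)
  then have "\<forall>i. cmod (d i) = 1" using Q(2) unitary_diag_mat_iff by metis
  then show ?thesis using Q by blast
qed

section \<open>Singular values and the absolute value\<close>

lemma orthonormal_family_extend:
  fixes a :: "'n::finite \<Rightarrow> complex^'n" and I :: "'n set"
  assumes on: "\<forall>i\<in>I. \<forall>j\<in>I. cinner (a i) (a j) = (if i = j then 1 else 0)"
  shows "\<exists>e. (\<forall>i j. cinner (e i) (e j) = (if i = j then 1 else 0)) \<and> (\<forall>i\<in>I. e i = a i)"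
proof -
  have inj: "inj_on a I"
  proof (rule inj_onI)
    fix i j assume "i \<in> I" "j \<in> I" "a i = a j"
    then show "i = j" using on by (metis zero_neq_one)
  qed
  define B0 where "B0 = a ` I"
  have oB0: "orthonormal_set B0"
    unfolding orthonormal_set_def B0_def
  proof (intro conjI ballI impI)
    fix b assume "b \<in> a ` I"
    then obtain i where "i \<in> I" "b = a i" by blast
    then show "cinner b b = 1" using on by simp
  next
    fix b c assume "b \<in> a ` I" "c \<in> a ` I" "b \<noteq> c"
    then obtain i j where "i \<in> I" "b = a i" "j \<in> I" "c = a j" by blast
    then show "cinner b c = 0" using on \<open>b \<noteq> c\<close> by auto
  qed
  have cB0: "card B0 = card I" using inj by (simp add: B0_def card_image)
  have "card I \<le> CARD('n)" by (simp add: card_mono)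
  then have "\<exists>B. orthonormal_set B \<and> finite B \<and> B0 \<subseteq> B \<and> card B = CARD('n)"
    using oB0 cB0 by (intro extend_to_card[of orthonormal_set B0]) (auto simp: B0_def orthonormal_set_extend_one)
  then obtain B where B: "orthonormal_set B" "finite B" "B0 \<subseteq> B" "card B = CARD('n)" by blast
  have "card (B - B0) = CARD('n) - card I" using B cB0 by (simp add: card_Diff_subset finite_subset)
  also have "\<dots> = card (UNIV - I)" by (simp add: card_Diff_subset)
  finally obtain h where h: "bij_betw h (UNIV - I) (B - B0)"
    using finite_same_card_bij[of "UNIV - I" "B - B0"] B(2) by auto
  define e where "e = (\<lambda>j. if j \<in> I then a j else h j)"
  have "bij_betw e I B0"
    using bij_betw_cong[of I e a] inj by (simp add: e_def B0_def bij_betw_imageI)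
  moreover have "bij_betw e (UNIV - I) (B - B0)"
    using bij_betw_cong[of "UNIV - I" e h] h by (simp add: e_def)
  ultimately have "bij_betw e UNIV B"
    using bij_betw_combine[of e I B0 "UNIV - I" "B - B0"] B(3) by (simp add: Un_absorb1)
  then have "\<forall>i j. cinner (e i) (e j) = (if i = j then 1 else 0)"
    using B(1) orthonormal_family_of_bij by blast
  moreover have "\<forall>i\<in>I. e i = a i" by (simp add: e_def)
  ultimately show ?thesis by blast
qed

lemma singular_value_decomposition:
  fixes A :: "'n::finite cmat"
  shows "\<exists>Q W s. unitary Q \<and> unitary W \<and> (\<forall>j. 0 \<le> s j) \<and>
     A ** Q = W ** diag_mat (\<lambda>j. complex_of_real (s j)) \<and> (\<forall>j. s j = norm (A *v column j Q))"
proof -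
  define P where "P = cmat_adj A ** A"
  have nP: "normal_matrix P" by (simp add: P_def normal_matrix_def cmat_adj_mult)
  obtain Q d where Q: "unitary Q" "\<forall>j. P *v column j Q = d j *s column j Q"
    using normal_unitarily_diagonalizable[OF nP] by blast
  define q where "q = (\<lambda>j. column j Q)"
  define s where "s = (\<lambda>j. norm (A *v q j))"
  have orthA: "cinner (A *v q i) (A *v q j) = 0" if "i \<noteq> j" for i j
  proof -
    have "cinner (A *v q i) (A *v q j) = cinner (q i) (P *v q j)"
      by (simp add: cinner_matrix_left P_def matrix_vector_mul_assoc)
    also have "\<dots> = d j * cinner (q i) (q j)" using Q(2) by (simp add: q_def cinner_scale_right)
    also have "\<dots> = 0" using unitary_columns_orthonormal[OF Q(1)] that by (simp add: q_def)
    finally show ?thesis .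
  qed
  define I where "I = {j. s j \<noteq> 0}"
  define a where "a = (\<lambda>j. complex_of_real (1 / s j) *s (A *v q j))"
  have on: "\<forall>i\<in>I. \<forall>j\<in>I. cinner (a i) (a j) = (if i = j then 1 else 0)"
  proof (intro ballI)
    fix i j assume i: "i \<in> I" and j: "j \<in> I"
    show "cinner (a i) (a j) = (if i = j then 1 else 0)"
    proof (cases "i = j")
      case True
      have "A *v q i \<noteq> 0" using i by (simp add: I_def s_def)
      then show ?thesis using True cinner_self_normalized[of "A *v q i"] by (simp add: a_def s_def)
    next
      case False
      then show ?thesis by (simp add: a_def cinner_scale_left cinner_scale_right orthA)
    qed
  qed
  obtain e where e: "\<forall>i j. cinner (e i) (e j) = (if i = j then 1 else 0)" "\<forall>i\<in>I. e i = a i"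
    using orthonormal_family_extend[OF on] by blast
  define W :: "'n cmat" where "W = (\<chi> i j. e j $ i)"
  have uW: "unitary W" and cW: "\<And>j. column j W = e j"
    using unitary_of_orthonormal_columns[OF e(1)] by (auto simp: W_def)
  have Aq: "A *v q j = complex_of_real (s j) *s e j" for j
  proof (cases "j \<in> I")
    case True
    then have "s j \<noteq> 0" by (simp add: I_def)
    then show ?thesis using True e(2) by (simp add: a_def vec_eq_iff)
  next
    case False
    then have "A *v q j = 0" by (simp add: I_def s_def)
    then show ?thesis using False by (simp add: I_def)
  qed
  have AQ: "A ** Q = W ** diag_mat (\<lambda>j. complex_of_real (s j))"
    by (rule columns_eqI) (simp add: column_matrix_mult[of _ A] column_mult_diag_mat cW Aq[unfolded q_def])
  have "\<forall>j. 0 \<le> s j" by (simp add: s_def)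
  then show ?thesis using Q(1) uW AQ
    by (intro exI[of _ Q] exI[of _ W] exI[of _ s]) (simp add: s_def q_def)
qed

lemma cinner_diag_mat_real:
  "cinner y (diag_mat (\<lambda>i. complex_of_real (s i)) *v y) = complex_of_real (\<Sum>i\<in>UNIV. s i * (cmod (y$i))^2)"
proof -
  have "cinner y (diag_mat (\<lambda>i. complex_of_real (s i)) *v y)
      = (\<Sum>i\<in>UNIV. cnj (y$i) * (complex_of_real (s i) * y$i))"
    by (simp add: diag_mat_vector_mult cinner_def)
  also have "\<dots> = (\<Sum>i\<in>UNIV. complex_of_real (s i * (cmod (y$i))^2))"
  proof (intro sum.cong refl)
    fix i
    have "cnj (y$i) * y$i = complex_of_real ((cmod (y$i))^2)"
      using complex_norm_square[of "y$i"] by (simp only: mult.commute)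
    then show "cnj (y$i) * (complex_of_real (s i) * y$i) = complex_of_real (s i * (cmod (y$i))^2)"
      by (simp add: mult.left_commute)
  qed
  finally show ?thesis by simp
qed

lemma psd_unitary_conj_diag:
  assumes Q: "unitary Q" and s: "\<forall>j. 0 \<le> s j"
  shows "psd (Q ** diag_mat (\<lambda>i. complex_of_real (s i)) ** cmat_adj Q)"
proof -
  define D where "D = diag_mat (\<lambda>i. complex_of_real (s i))"
  have "cmat_adj (Q ** D ** cmat_adj Q) = Q ** D ** cmat_adj Q"
    by (simp add: D_def cmat_adj_mult matrix_mul_assoc)
  moreover have "cinner x ((Q ** D ** cmat_adj Q) *v x) \<in> \<real> \<and>
      0 \<le> Re (cinner x ((Q ** D ** cmat_adj Q) *v x))" for x
  proof -
    have "cinner x ((Q ** D ** cmat_adj Q) *v x) = cinner x (Q *v (D *v (cmat_adj Q *v x)))"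
      by (simp add: matrix_vector_mul_assoc matrix_mul_assoc)
    also have "\<dots> = cinner (cmat_adj Q *v x) (D *v (cmat_adj Q *v x))" by (rule cinner_matrix_right)
    also have "\<dots> = complex_of_real (\<Sum>i\<in>UNIV. s i * (cmod ((cmat_adj Q *v x)$i))^2)"
      unfolding D_def by (rule cinner_diag_mat_real)
    finally show ?thesis using s by (simp add: sum_nonneg)
  qed
  ultimately show ?thesis by (simp add: psd_def D_def)
qed

(* The eigenvalue c of P is a nonnegative real, and in the coordinates w = Q\<^sup>*r every nonzero
   entry satisfies s\<^sub>k\<^sup>2 = c\<^sup>2, hence s\<^sub>k = c. *)
lemma psd_square_root_eigenvector:
  assumes Q: "unitary Q" and s: "\<forall>j. 0 \<le> s j" and pP: "psd P"
    and sq: "P ** P = Q ** diag_mat (\<lambda>i. complex_of_real ((s i)^2)) ** cmat_adj Q"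
    and Pr: "P *v r = c *s r" and rr: "cinner r r = 1"
  shows "(Q ** diag_mat (\<lambda>i. complex_of_real (s i)) ** cmat_adj Q) *v r = c *s r"
proof -
  define D2 where "D2 = diag_mat (\<lambda>i. complex_of_real ((s i)^2))"
  have QQ: "cmat_adj Q ** Q = mat 1" "Q ** cmat_adj Q = mat 1" using Q by (auto simp: unitary_def)
  have "cinner r (P *v r) = c" using Pr rr by (simp add: cinner_scale_right)
  then obtain eps where eps: "c = complex_of_real eps" "0 \<le> eps"
    using pP unfolding psd_def by (metis Re_complex_of_real Reals_cases)
  define w where "w = cmat_adj Q *v r"
  have "P *v (P *v r) = (c * c) *s r" using Pr by (simp add: matrix_vector_mult_cscale vector_smult_assoc)
  then have "(Q ** D2 ** cmat_adj Q) *v r = (c * c) *s r"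
    using sq by (simp add: matrix_vector_mul_assoc D2_def)
  then have "cmat_adj Q *v ((Q ** D2 ** cmat_adj Q) *v r) = (c * c) *s w"
    by (simp add: w_def matrix_vector_mult_cscale)
  moreover have "cmat_adj Q *v ((Q ** D2 ** cmat_adj Q) *v r) = D2 *v w"
    by (simp add: w_def matrix_vector_mul_assoc matrix_mul_assoc QQ(1))
  ultimately have D2w: "D2 *v w = (c * c) *s w" by simp
  have "complex_of_real (s k) * w $ k = c * w $ k" for k
  proof (cases "w $ k = 0")
    case False
    have "complex_of_real ((s k)^2) * w $ k = c * c * w $ k"
      using D2w unfolding D2_def diag_mat_vector_mult by (simp add: vec_eq_iff)
    then have "(s k)^2 = eps^2" using False eps by (simp add: power2_eq_square flip: of_real_mult)
    then have "s k = eps" using s eps(2) by (simp add: power2_eq_iff_nonneg)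
    then show ?thesis using eps by simp
  qed simp
  then have Dw: "diag_mat (\<lambda>i. complex_of_real (s i)) *v w = c *s w"
    by (simp add: diag_mat_vector_mult vec_eq_iff)
  have "(Q ** diag_mat (\<lambda>i. complex_of_real (s i)) ** cmat_adj Q) *v r
      = Q *v (diag_mat (\<lambda>i. complex_of_real (s i)) *v w)"
    by (simp add: w_def matrix_vector_mul_assoc matrix_mul_assoc)
  also have "\<dots> = c *s (Q *v w)" by (simp add: Dw matrix_vector_mult_cscale)
  also have "Q *v w = r" by (simp add: w_def matrix_vector_mul_assoc QQ(2))
  finally show ?thesis .
qed

lemma psd_square_root_unique:
  assumes Q: "unitary Q" and s: "\<forall>j. 0 \<le> s j" and pP: "psd P"
    and sq: "P ** P = Q ** diag_mat (\<lambda>i. complex_of_real ((s i)^2)) ** cmat_adj Q"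
  shows "P = Q ** diag_mat (\<lambda>i. complex_of_real (s i)) ** cmat_adj Q"
proof -
  define R where "R = Q ** diag_mat (\<lambda>i. complex_of_real (s i)) ** cmat_adj Q"
  have "normal_matrix P" using pP by (simp add: normal_matrix_def psd_def)
  then obtain Q' e where Q': "unitary Q'" "\<forall>j. P *v column j Q' = e j *s column j Q'"
    using normal_unitarily_diagonalizable by blast
  have "R *v column j Q' = P *v column j Q'" for j
    using psd_square_root_eigenvector[OF Q s pP sq] Q' unitary_columns_orthonormal[OF Q'(1)]
    by (simp add: R_def)
  then have "R ** Q' = P ** Q'" by (intro columns_eqI) (simp add: column_matrix_mult)
  then have "R ** Q' ** cmat_adj Q' = P ** Q' ** cmat_adj Q'" by simp
  then show ?thesis using Q'(1) by (simp add: R_def unitary_def flip: matrix_mul_assoc)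
qed

lemma cmat_abs_svd:
  fixes A :: "'n::finite cmat"
  assumes Q: "unitary Q" and W: "unitary W" and s: "\<forall>j. 0 \<le> s j"
    and AQ: "A ** Q = W ** diag_mat (\<lambda>j. complex_of_real (s j))"
  shows "cmat_abs A = Q ** diag_mat (\<lambda>j. complex_of_real (s j)) ** cmat_adj Q"
proof -
  define D where "D = diag_mat (\<lambda>j. complex_of_real (s j))"
  define R where "R = Q ** D ** cmat_adj Q"
  have QQ: "cmat_adj Q ** Q = mat 1" "Q ** cmat_adj Q = mat 1" using Q by (auto simp: unitary_def)
  have WW: "cmat_adj W ** W = mat 1" using W by (auto simp: unitary_def)
  have Aeq: "A = W ** D ** cmat_adj Q" using mult_unitary_eqD[OF Q AQ] by (simp add: D_def)
  have DD: "D ** D = diag_mat (\<lambda>i. complex_of_real ((s i)^2))"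
    by (simp add: D_def diag_mat_mult power2_eq_square)
  have AA: "cmat_adj A ** A = Q ** diag_mat (\<lambda>i. complex_of_real ((s i)^2)) ** cmat_adj Q"
  proof -
    have "cmat_adj A ** A = Q ** D ** (cmat_adj W ** W) ** D ** cmat_adj Q"
      by (simp add: Aeq cmat_adj_mult D_def matrix_mul_assoc)
    also have "\<dots> = Q ** (D ** D) ** cmat_adj Q" by (simp add: WW matrix_mul_assoc)
    finally show ?thesis by (simp add: DD)
  qed
  have RR: "R ** R = cmat_adj A ** A"
  proof -
    have "R ** R = Q ** D ** (cmat_adj Q ** Q) ** D ** cmat_adj Q" by (simp add: R_def matrix_mul_assoc)
    also have "\<dots> = Q ** (D ** D) ** cmat_adj Q" by (simp add: QQ matrix_mul_assoc)
    finally show ?thesis by (simp add: DD AA)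
  qed
  have "cmat_abs A = R" unfolding cmat_abs_def
  proof (rule the_equality)
    show "psd R \<and> R ** R = cmat_adj A ** A"
      using psd_unitary_conj_diag[OF Q s] RR by (simp add: R_def D_def)
    show "P = R" if "psd P \<and> P ** P = cmat_adj A ** A" for P
      using psd_square_root_unique[OF Q s] that AA by (simp add: R_def D_def)
  qed
  then show ?thesis by (simp add: R_def D_def)
qed

lemma real_diag_mean_of_unitary_diags:
  fixes s :: "'n::finite \<Rightarrow> real"
  assumes s: "\<forall>j. 0 \<le> s j \<and> s j \<le> m" and m: "0 < m"
  defines "u \<equiv> (\<lambda>j. Complex (s j / m) (sqrt (1 - (s j / m)^2)))"
  shows "diag_mat (\<lambda>j. complex_of_real (s j))
      = cmat_scale (complex_of_real (m/2)) (diag_mat u + diag_mat (\<lambda>j. cnj (u j)))"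
    and "\<forall>j. cmod (u j) = 1" "\<forall>j. cmod (cnj (u j)) = 1"
proof -
  show "diag_mat (\<lambda>j. complex_of_real (s j))
      = cmat_scale (complex_of_real (m/2)) (diag_mat u + diag_mat (\<lambda>j. cnj (u j)))"
    using m by (auto simp: vec_eq_iff u_def complex_eq_iff)
  have "cmod (u j) = 1" for j
  proof -
    have "0 \<le> s j / m" "s j / m \<le> 1" using s m by auto
    then have "(s j / m)^2 \<le> 1" by (simp add: power_le_one)
    then have "(s j / m)^2 + (sqrt (1 - (s j / m)^2))^2 = 1" by simp
    then show ?thesis by (simp add: u_def cmod_def)
  qed
  then show "\<forall>j. cmod (u j) = 1" "\<forall>j. cmod (cnj (u j)) = 1" by auto
qed

section \<open>Operator norm and numerical radius\<close>

lemma bdd_above_op_norm: "bdd_above {norm (A *v x) |x. norm (x::complex^'n::finite) = 1}"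
proof -
  obtain K where K: "\<And>x. norm (A *v x) \<le> norm x * K"
    using bounded_linear.bounded[OF matrix_vector_mul_bounded_linear] by blast
  have "norm (A *v x) \<le> K" if "norm x = 1" for x
    using K[of x] that by simp
  then show ?thesis by (intro bdd_aboveI[where M = K]) auto
qed

lemma norm_matrix_vector_le_op_norm: "norm x = 1 \<Longrightarrow> norm (A *v x) \<le> op_norm A"
  unfolding op_norm_def by (rule cSup_upper) (auto intro: bdd_above_op_norm)

lemma bdd_above_num_radius: "bdd_above {cmod (cinner x (X *v x)) |x. norm (x::complex^'n::finite) = 1}"
proof -
  obtain K where K: "\<And>x. norm x = 1 \<Longrightarrow> norm (X *v x) \<le> K"
    using bdd_above_op_norm[of X] unfolding bdd_above_def by blast
  have "cmod (cinner x (X *v x)) \<le> K" if "norm x = 1" for x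
    using cmod_cinner_le_norm_mult[of x "X *v x"] K[OF that] that by simp
  then show ?thesis unfolding bdd_above_def by blast
qed

lemma cmod_quadratic_form_le_num_radius: "norm x = 1 \<Longrightarrow> cmod (cinner x (X *v x)) \<le> num_radius X"
  unfolding num_radius_def by (rule cSup_upper) (auto intro: bdd_above_num_radius)

lemma num_radius_nonneg: "0 \<le> num_radius X"
  using cmod_quadratic_form_le_num_radius[OF norm_axis_one, of _ X] by (meson norm_ge_zero order_trans)

lemma num_radius_zero_le_one: "num_radius (0::'n::finite cmat) \<le> 1"
  unfolding num_radius_def
proof (rule cSup_least)
  show "{cmod (cinner x ((0::'n cmat) *v x)) |x. norm x = 1} \<noteq> {}" using norm_axis_one by blast
qed auto

lemma cmod_quadratic_form_le_num_radius_norm: "cmod (cinner w (X *v w)) \<le> num_radius X * (norm w)^2"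
proof (cases "w = 0")
  case True then show ?thesis by simp
next
  case False
  define r where "r = 1 / norm w"
  define u where "u = complex_of_real r *s w"
  have "u = r *\<^sub>R w" by (simp add: u_def scaleR_eq_vec_cscale)
  then have nu: "norm u = 1" using False by (simp add: r_def)
  have "cinner u (X *v u) = complex_of_real (r * r) * cinner w (X *v w)"
    by (simp add: u_def cinner_scale_left cinner_scale_right matrix_vector_mult_cscale)
  then have "cmod (cinner u (X *v u)) = \<bar>r * r\<bar> * cmod (cinner w (X *v w))"
    by (simp only: norm_mult norm_of_real)
  then have "cmod (cinner u (X *v u)) = r * r * cmod (cinner w (X *v w))" by simp
  then have "r * r * cmod (cinner w (X *v w)) \<le> num_radius X" using cmod_quadratic_form_le_num_radius[of u X] nu by simp
  then show ?thesis using False by (simp add: r_def field_simps power2_eq_square)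
qed

lemma cmod_entry_le_num_radius: fixes X :: "'n::finite cmat" shows "cmod (X $ i $ j) \<le> 4 * num_radius X"
proof (cases "i = j")
  case True
  then show ?thesis
    using cmod_quadratic_form_le_num_radius[OF norm_axis_one, of i X] num_radius_nonneg[of X]
    by (simp add: cinner_axis_matrix)
next
  case False
  define u where "u = (axis i 1 :: complex^'n)"
  define v where "v = (axis j 1 :: complex^'n)"
  have uu: "cinner u u = 1" "cinner v v = 1" using norm_axis_one by (simp_all add: u_def v_def cinner_self)
  have uv: "cinner u v = 0" "cinner v u = 0" using False unfolding u_def v_def cinner_axis_left by (simp_all add: axis_def)
  define w where "w = num_radius X"
  have nc: "(norm (u + c *s v))^2 = 2" if "cmod c = 1" for c
  proof -
    have "cinner (u + c *s v) (u + c *s v) = 1 + cnj c * c" by (simp add: cinner_self_expand uu uv)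
    also have "cnj c * c = 1" using that complex_norm_square[of c] by (simp add: mult.commute)
    finally have "complex_of_real ((norm (u + c *s v))^2) = 2" by (simp add: cinner_self)
    then have "Re (complex_of_real ((norm (u + c *s v))^2)) = Re 2" by (rule arg_cong)
    then show ?thesis by (simp only: Re_complex_of_real) simp
  qed
  define p where "p = cinner (u + 1 *s v) (X *v (u + 1 *s v))"
  define q where "q = cinner (u + \<i> *s v) (X *v (u + \<i> *s v))"
  have p: "p = X$i$i + X$i$j + X$j$i + X$j$j"
    unfolding p_def cinner_quadratic_form_expand by (simp add: u_def v_def cinner_axis_matrix)
  have q: "q = X$i$i + \<i> * X$i$j - \<i> * X$j$i + X$j$j"
    unfolding q_def cinner_quadratic_form_expand by (simp add: u_def v_def cinner_axis_matrix)
  have polarization: "2 * X$i$j = (p - X$i$i - X$j$j) - \<i> * (q - X$i$i - X$j$j)"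
    unfolding p q by (simp add: algebra_simps)
  have triangle_p: "cmod (p - X$i$i - X$j$j) \<le> cmod p + cmod (X$i$i) + cmod (X$j$j)"
    by (metis add_mono_thms_linordered_semiring(3) norm_triangle_ineq4 order_trans)
  have triangle_q: "cmod (q - X$i$i - X$j$j) \<le> cmod q + cmod (X$i$i) + cmod (X$j$j)"
    by (metis add_mono_thms_linordered_semiring(3) norm_triangle_ineq4 order_trans)
  have "cmod ((p - X$i$i - X$j$j) - \<i> * (q - X$i$i - X$j$j)) \<le>
      cmod (p - X$i$i - X$j$j) + cmod (\<i> * (q - X$i$i - X$j$j))"
    by (rule norm_triangle_ineq4)
  also have "cmod (\<i> * (q - X$i$i - X$j$j)) = cmod (q - X$i$i - X$j$j)" by (simp add: norm_mult)
  finally have "cmod (2 * X$i$j) \<le> cmod p + cmod (X$i$i) + cmod (X$j$j) + (cmod q + cmod (X$i$i) + cmod (X$j$j))"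
    using triangle_p triangle_q unfolding polarization by linarith
  moreover have "cmod p \<le> 2 * w"
    using cmod_quadratic_form_le_num_radius_norm[of "u + 1 *s v" X] nc[of 1] by (simp add: p_def w_def)
  moreover have "cmod q \<le> 2 * w"
    using cmod_quadratic_form_le_num_radius_norm[of "u + \<i> *s v" X] nc[of \<i>] by (simp add: q_def w_def)
  moreover have "cmod (X$i$i) \<le> w" "cmod (X$j$j) \<le> w"
    using cmod_quadratic_form_le_num_radius[OF norm_axis_one, of _ X] by (simp_all add: cinner_axis_matrix w_def)
  ultimately have "2 * cmod (X$i$j) \<le> 8 * w" by (simp add: norm_mult)
  then show ?thesis by (simp add: w_def)
qed

lemma bdd_above_num_radius_dual: "bdd_above {cmod (trace (cmat_adj Y ** X)) |X. num_radius (X::'n::finite cmat) \<le> 1}"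
proof -
  define K where "K = (\<Sum>j\<in>UNIV. \<Sum>i\<in>UNIV. cmod (Y$i$j) * 4)"
  have "cmod (trace (cmat_adj Y ** X)) \<le> K" if "num_radius X \<le> 1" for X :: "'n cmat"
  proof -
    have "cmod (trace (cmat_adj Y ** X)) \<le> (\<Sum>j\<in>UNIV. cmod (\<Sum>i\<in>UNIV. cnj (Y$i$j) * X$i$j))"
      unfolding trace_cmat_adj_mult by (rule norm_sum)
    also have "\<dots> \<le> K" unfolding K_def
    proof (rule sum_mono)
      fix j
      have "cmod (\<Sum>i\<in>UNIV. cnj (Y$i$j) * X$i$j) \<le> (\<Sum>i\<in>UNIV. cmod (cnj (Y$i$j) * X$i$j))"
        by (rule norm_sum)
      also have "\<dots> \<le> (\<Sum>i\<in>UNIV. cmod (Y$i$j) * 4)"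
      proof (rule sum_mono)
        fix i
        have "cmod (X$i$j) \<le> 4" using cmod_entry_le_num_radius[of X i j] that by simp
        then show "cmod (cnj (Y$i$j) * X$i$j) \<le> cmod (Y$i$j) * 4"
          by (simp add: norm_mult mult_left_mono)
      qed
      finally show "cmod (\<Sum>i\<in>UNIV. cnj (Y$i$j) * X$i$j) \<le> (\<Sum>i\<in>UNIV. cmod (Y$i$j) * 4)" .
    qed
    finally show ?thesis .
  qed
  then show ?thesis unfolding bdd_above_def by blast
qed

lemma cmod_trace_le_num_radius_dual:
  "num_radius X \<le> 1 \<Longrightarrow> cmod (trace (cmat_adj A ** X)) \<le> num_radius_dual A"
  unfolding num_radius_dual_def by (rule cSup_upper) (auto intro: bdd_above_num_radius_dual)

section \<open>Normalized weakly unitarily invariant norms\<close>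

locale normalized_wui_norm =
  fixes N :: "'n::finite cmat \<Rightarrow> real"
  assumes wui: "weakly_unitarily_invariant N"
    and chi: "\<forall>E. rank_one_proj E \<longrightarrow> N E = 1"
begin

lemma N_nonneg: "0 \<le> N A"
  using wui unfolding weakly_unitarily_invariant_def is_matrix_norm_def by blast

lemma N_eq_0: "N A = 0 \<longleftrightarrow> A = 0"
  using wui unfolding weakly_unitarily_invariant_def is_matrix_norm_def by blast

lemma N_scale: "N (cmat_scale c A) = cmod c * N A"
  using wui unfolding weakly_unitarily_invariant_def is_matrix_norm_def by blast

lemma N_triangle: "N (A + B) \<le> N A + N B"
  using wui unfolding weakly_unitarily_invariant_def is_matrix_norm_def by blast

lemma N_unitary: "unitary U \<Longrightarrow> N (cmat_adj U ** A ** U) = N A"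
  using wui unfolding weakly_unitarily_invariant_def by blast

lemma N_0[simp]: "N 0 = 0" using N_eq_0 by simp

lemma N_proj: "norm x = 1 \<Longrightarrow> N (proj x) = 1"
  using chi rank_one_proj_proj by blast

lemma N_matrix_unit_diag: "N (matrix_unit a a) = 1"
  using N_proj[OF norm_axis_one] by (simp add: proj_axis_one)

lemma N_minus: "N (- A) = N A"
  using N_scale[of "-1" A] by (simp add: cmat_scale_minus_one)

lemma N_diff_ge: "N A - N B \<le> N (A - B)"
  using N_triangle[of "A - B" B] by simp

lemma N_sum: "N (sum f S) \<le> (\<Sum>i\<in>S. N (f i))"
proof (induction S rule: infinite_finite_induct)
  case (insert x F)
  then show ?case using N_triangle[of "f x" "sum f F"] by simp
qed simp_all

lemma N_le_sum_matrix_units: "N X \<le> (\<Sum>a\<in>UNIV. \<Sum>b\<in>UNIV. N (matrix_unit a b)) * norm X"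
proof -
  have "N X \<le> (\<Sum>a\<in>UNIV. N (\<Sum>b\<in>UNIV. cmat_scale (X$a$b) (matrix_unit a b)))"
    using N_sum[of "\<lambda>a. \<Sum>b\<in>UNIV. cmat_scale (X$a$b) (matrix_unit a b)" UNIV]
    by (simp add: sum_matrix_unit_expansion)
  also have "\<dots> \<le> (\<Sum>a\<in>UNIV. \<Sum>b\<in>UNIV. N (cmat_scale (X$a$b) (matrix_unit a b)))"
    by (intro sum_mono N_sum)
  also have "\<dots> \<le> (\<Sum>a\<in>UNIV. \<Sum>b\<in>UNIV. N (matrix_unit a b) * norm X)"
  proof (intro sum_mono)
    fix a b
    have "cmod (X$a$b) \<le> norm X"
      using Finite_Cartesian_Product.norm_nth_le[of "X$a" b] Finite_Cartesian_Product.norm_nth_le[of X a] by simp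
    then have "cmod (X$a$b) * N (matrix_unit a b) \<le> norm X * N (matrix_unit a b)"
      by (rule mult_right_mono) (rule N_nonneg)
    then show "N (cmat_scale (X$a$b) (matrix_unit a b)) \<le> N (matrix_unit a b) * norm X"
      by (simp add: N_scale mult.commute)
  qed
  also have "\<dots> = (\<Sum>a\<in>UNIV. \<Sum>b\<in>UNIV. N (matrix_unit a b)) * norm X" by (simp add: sum_distrib_right)
  finally show ?thesis .
qed

lemma continuous_on_N: "continuous_on UNIV N"
proof -
  define C where "C = (\<Sum>a\<in>UNIV. \<Sum>b\<in>UNIV. N (matrix_unit a b))"
  have C0: "0 \<le> C" unfolding C_def by (intro sum_nonneg N_nonneg)
  have "dist (N X) (N Y) \<le> C * dist X Y" for X Y
  proof -
    have "N X - N Y \<le> N (X - Y)" by (rule N_diff_ge)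
    moreover have "N Y - N X \<le> N (X - Y)" using N_diff_ge[of Y X] N_minus[of "X - Y"] by simp
    moreover have "N (X - Y) \<le> C * norm (X - Y)" using N_le_sum_matrix_units[of "X - Y"] by (simp add: C_def)
    ultimately show ?thesis by (simp add: dist_real_def dist_norm abs_le_iff)
  qed
  then have "C-lipschitz_on UNIV N" using C0 by (simp add: lipschitz_on_def)
  then show ?thesis by (rule lipschitz_on_continuous_on)
qed

lemma closed_N_unit_ball: "closed {X. N X \<le> 1}"
  by (rule closed_Collect_le[OF continuous_on_N continuous_on_const])

lemma convex_N_unit_ball: "convex {X. N X \<le> 1}"
proof (rule convexI)
  fix x y and u v :: real
  assume x: "x \<in> {X. N X \<le> 1}" and y: "y \<in> {X. N X \<le> 1}" and "0 \<le> u" "0 \<le> v" "u + v = 1"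
  then have uv: "0 \<le> u \<and> 0 \<le> v \<and> u + v = 1" by simp
  have "N (u *\<^sub>R x + v *\<^sub>R y) \<le> N (u *\<^sub>R x) + N (v *\<^sub>R y)" by (rule N_triangle)
  also have "\<dots> = u * N x + v * N y" using uv by (simp add: scaleR_eq_cmat_scale N_scale)
  also have "\<dots> \<le> u * 1 + v * 1" using x y uv by (intro add_mono mult_left_mono) auto
  finally show "u *\<^sub>R x + v *\<^sub>R y \<in> {X. N X \<le> 1}" using uv by simp
qed

lemma num_radius_le_one_if_separating:
  assumes WS: "\<forall>X. N X \<le> 1 \<longrightarrow> inner W X < 1"
  shows "num_radius W \<le> 1"
  unfolding num_radius_def
proof (rule cSup_least)
  show "{cmod (cinner x (W *v x)) |x. norm x = 1} \<noteq> {}" using norm_axis_one by blast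
next
  fix r assume "r \<in> {cmod (cinner x (W *v x)) |x. norm x = 1}"
  then obtain x where x: "norm x = 1" and r: "r = cmod (cinner x (W *v x))" by blast
  define c where "c = cinner x (W *v x)"
  show "r \<le> 1"
  proof (cases "c = 0")
    case True then show ?thesis by (simp add: r c_def)
  next
    case False
    define th where "th = c / complex_of_real (cmod c)"
    have th1: "cmod th = 1" using False by (simp add: th_def norm_divide)
    define X where "X = cmat_scale th (proj x)"
    have NX: "N X \<le> 1" using th1 N_proj[OF x] by (simp add: X_def N_scale)
    have "inner W X = Re (th * trace (cmat_adj W ** proj x))"
      by (simp add: inner_cmat_eq_Re_trace X_def cmat_scale_mult_right trace_cmat_scale)
    also have "trace (cmat_adj W ** proj x) = cnj c"
      by (simp add: trace_mult_proj c_def cinner_matrix_right cinner_commute[of "W *v x" x])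
    also have "th * cnj c = complex_of_real (cmod c)"
    proof -
      have "c * cnj c = complex_of_real ((cmod c)^2)" by (rule complex_norm_square[symmetric])
      then show ?thesis using False by (simp add: th_def power2_eq_square field_simps)
    qed
    finally have "inner W X = cmod c" by simp
    moreover have "inner W X < 1" using WS NX by blast
    ultimately show ?thesis by (simp add: r c_def)
  qed
qed

lemma exists_num_radius_functional_outside_N_unit_ball:
  assumes "1 < N z"
  shows "\<exists>W. num_radius W \<le> 1 \<and> 1 < inner W z"
proof -
  have "z \<notin> {X. N X \<le> 1}" using assms by simp
  then obtain a b where ab: "inner a z < b" "\<forall>x\<in>{X. N X \<le> 1}. b < inner a x"
    using separating_hyperplane_closed_point[OF convex_N_unit_ball closed_N_unit_ball] by blast
  have b0: "b < 0" using ab(2) by (metis N_0 inner_zero_right mem_Collect_eq zero_le_one)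
  define W where "W = (1/b) *\<^sub>R a"
  have "\<forall>X. N X \<le> 1 \<longrightarrow> inner W X < 1"
  proof (intro allI impI)
    fix X assume "N X \<le> 1"
    then have "b < inner a X" using ab(2) by simp
    then show "inner W X < 1" using b0 by (simp add: W_def field_simps)
  qed
  then have "num_radius W \<le> 1" by (rule num_radius_le_one_if_separating)
  moreover have "1 < inner W z" using ab(1) b0 by (simp add: W_def field_simps)
  ultimately show ?thesis by blast
qed

lemma N_le_num_radius_dual: "N A \<le> num_radius_dual A"
proof (rule dense_le)
  fix t assume t: "t < N A"
  show "t \<le> num_radius_dual A"
  proof (cases "t \<le> 0")
    case True
    have "cmod (trace (cmat_adj A ** 0)) \<le> num_radius_dual A"
      by (rule cmod_trace_le_num_radius_dual[OF num_radius_zero_le_one])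
    then show ?thesis using True by (simp add: trace_def)
  next
    case False
    then have t0: "0 < t" by simp
    define z where "z = (1/t) *\<^sub>R A"
    have "N z = N A / t" using t0 by (simp add: z_def scaleR_eq_cmat_scale N_scale norm_divide)
    then have "1 < N z" using t0 t by simp
    then obtain W where W: "num_radius W \<le> 1" "1 < inner W z"
      using exists_num_radius_functional_outside_N_unit_ball by blast
    have "t < t * inner W z" using W(2) t0 by simp
    also have "\<dots> = Re (trace (cmat_adj W ** A))"
      using t0 by (simp add: z_def flip: inner_cmat_eq_Re_trace)
    also have "\<dots> \<le> cmod (trace (cmat_adj A ** W))"
      by (metis cmat_adj_adj cmat_adj_mult complex_Re_le_cmod complex_mod_cnj trace_cmat_adj)
    also have "\<dots> \<le> num_radius_dual A" by (rule cmod_trace_le_num_radius_dual[OF W(1)])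
    finally show ?thesis by simp
  qed
qed

lemma num_radius_le_N: assumes "M_norm N" shows "num_radius A \<le> N A"
proof -
  have "cmod (cinner x (A *v x)) \<le> N A" if "norm x = 1" for x
  proof -
    let ?P = "proj x"
    define C where "C = (\<lambda>i::nat. if i = 0 then ?P else mat 1 - ?P)"
    define X where "X = (\<lambda>i::nat. if i = 0 then A else 0)"
    have PP: "?P ** ?P = ?P" using proj_idem[OF that] .
    have hC: "(\<Sum>i<2. cmat_adj (C i) ** C i) = mat 1"
      by (simp add: C_def numeral_2_eq_2 cmat_adj_diff matrix_diff_rdistrib matrix_diff_ldistrib PP)
    have hS: "(\<Sum>i<2. cmat_adj (C i) ** X i ** C i) = ?P ** A ** ?P"
      by (simp add: C_def X_def numeral_2_eq_2)
    have "N (\<Sum>i<2. cmat_adj (C i) ** X i ** C i) \<le> (MAX i\<in>{..<2}. N (X i))"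
      using assms hC unfolding M_norm_def by blast
    also have "(MAX i\<in>{..<2::nat}. N (X i)) = N A"
      by (simp add: X_def numeral_2_eq_2 lessThan_Suc N_nonneg)
    finally have "N (?P ** A ** ?P) \<le> N A" using hS by simp
    then show ?thesis by (simp add: proj_sandwich N_scale N_proj that)
  qed
  moreover have "{cmod (cinner x (A *v x)) |x. norm x = 1} \<noteq> {}"
    using norm_axis_one by blast
  ultimately show ?thesis unfolding num_radius_def by (intro cSup_least) auto
qed

lemma N_diag_mat_le_one:
  assumes "M_norm N" "\<forall>i. cmod (d i) \<le> 1"
  shows "N (diag_mat d) \<le> 1"
proof -
  fix i0 :: 'n
  obtain f where f: "bij_betw f {..<CARD('n)} UNIV"
    and C: "(\<Sum>j<CARD('n). cmat_adj (matrix_unit i0 (f j)) ** matrix_unit i0 (f j)) = mat 1"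
    using matrix_units_resolve_identity by blast
  define X where "X = (\<lambda>j. cmat_scale (d (f j)) (matrix_unit i0 i0))"
  have "(\<Sum>j<CARD('n). cmat_adj (matrix_unit i0 (f j)) ** X j ** matrix_unit i0 (f j))
      = (\<Sum>j<CARD('n). cmat_scale (d (f j)) (matrix_unit (f j) (f j)))"
    by (simp add: X_def matrix_unit_sandwich)
  also have "\<dots> = diag_mat d"
    using sum.reindex_bij_betw[OF f, of "\<lambda>a. cmat_scale (d a) (matrix_unit a a)"]
    by (simp add: sum_matrix_unit_diag)
  finally have "N (diag_mat d) \<le> (MAX j\<in>{..<CARD('n)}. N (X j))"
    using assms(1)[unfolded M_norm_def, rule_format, OF C, of X] by simp
  also have "\<dots> \<le> 1"
    using assms(2) by (intro Max.boundedI) (auto simp: X_def N_scale N_matrix_unit_diag lessThan_empty_iff card_eq_0_iff)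
  finally show ?thesis .
qed

lemma N_unitary_le_one: assumes "M_norm N" "unitary U" shows "N U \<le> 1"
proof -
  obtain Q d where Q: "unitary Q" "cmat_adj Q ** U ** Q = diag_mat d" "\<forall>i. cmod (d i) = 1"
    using unitary_unitarily_diagonalizable[OF assms(2)] by blast
  have "N U = N (diag_mat d)" using N_unitary[OF Q(1), of U] Q(2) by simp
  also have "\<dots> \<le> 1" using N_diag_mat_le_one[OF assms(1)] Q(3) by simp
  finally show ?thesis .
qed

lemma N_unitary_mult_diag_le:
  assumes Mn: "M_norm N" and W: "unitary W" and s: "\<forall>j. 0 \<le> s j \<and> s j \<le> m" and m: "0 < m"
  shows "N (W ** diag_mat (\<lambda>j. complex_of_real (s j))) \<le> m"
proof -
  define u where "u = (\<lambda>j. Complex (s j / m) (sqrt (1 - (s j / m)^2)))"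
  define v where "v = (\<lambda>j. cnj (u j))"
  have dec: "diag_mat (\<lambda>j. complex_of_real (s j)) = cmat_scale (complex_of_real (m/2)) (diag_mat u + diag_mat v)"
    and cu: "\<forall>j. cmod (u j) = 1" and cv: "\<forall>j. cmod (v j) = 1"
    using real_diag_mean_of_unitary_diags[OF s m] by (simp_all add: u_def v_def)
  have uu: "unitary (W ** diag_mat u)" using W cu by (simp add: unitary_mult unitary_diag_mat_iff)
  have uv: "unitary (W ** diag_mat v)" using W cv by (simp add: unitary_mult unitary_diag_mat_iff)
  have "W ** diag_mat (\<lambda>j. complex_of_real (s j))
      = cmat_scale (complex_of_real (m/2)) (W ** diag_mat u + W ** diag_mat v)"
    by (simp add: dec cmat_scale_mult_right matrix_add_ldistrib)
  then have "N (W ** diag_mat (\<lambda>j. complex_of_real (s j))) = (m/2) * N (W ** diag_mat u + W ** diag_mat v)"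
    using m by (simp add: N_scale)
  also have "\<dots> \<le> (m/2) * (N (W ** diag_mat u) + N (W ** diag_mat v))"
    using m N_triangle by (simp add: mult_left_mono)
  also have "\<dots> \<le> (m/2) * (1 + 1)"
    using m N_unitary_le_one[OF Mn uu] N_unitary_le_one[OF Mn uv] by (intro mult_left_mono) auto
  finally show ?thesis by simp
qed

lemma N_le_op_norm: assumes Mn: "M_norm N" shows "N A \<le> op_norm A"
proof -
  obtain Q W s where Q: "unitary Q" and W: "unitary W" and s0: "\<forall>j. 0 \<le> s j"
    and AQ: "A ** Q = W ** diag_mat (\<lambda>j. complex_of_real (s j))" and sdef: "\<forall>j. s j = norm (A *v column j Q)"
    using singular_value_decomposition[of A] by blast
  define m where "m = op_norm A"
  have sm: "\<forall>j. 0 \<le> s j \<and> s j \<le> m"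
    using s0 sdef norm_matrix_vector_le_op_norm[OF unitary_column_norm[OF Q]] by (simp add: m_def)
  define W' where "W' = cmat_adj Q ** W"
  have uW': "unitary W'" using Q W by (simp add: W'_def unitary_mult unitary_cmat_adj)
  have "N A = N (cmat_adj Q ** A ** Q)" by (simp add: N_unitary[OF Q])
  also have "cmat_adj Q ** A ** Q = W' ** diag_mat (\<lambda>j. complex_of_real (s j))"
    by (simp add: W'_def AQ flip: matrix_mul_assoc)
  finally have NA: "N A = N (W' ** diag_mat (\<lambda>j. complex_of_real (s j)))" .
  have m0: "0 \<le> m" using sm by (meson order_trans)
  show ?thesis
  proof (cases "m = 0")
    case True
    then have "\<forall>j. s j = 0" using sm by (meson antisym)
    then have "diag_mat (\<lambda>j. complex_of_real (s j)) = 0" by (auto simp: vec_eq_iff)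
    then show ?thesis using NA True m_def by simp
  next
    case False
    then show ?thesis using NA N_unitary_mult_diag_le[OF Mn uW' sm] m0 by (simp add: m_def)
  qed
qed

lemma sum_cmod_diag_le_N:
  assumes "L_norm N"
  shows "(\<Sum>i\<in>UNIV. cmod (Y$i$i)) \<le> N Y"
proof -
  fix i0 :: 'n
  obtain f where f: "bij_betw f {..<CARD('n)} UNIV"
    and C: "(\<Sum>j<CARD('n). cmat_adj (matrix_unit i0 (f j)) ** matrix_unit i0 (f j)) = mat 1"
    using matrix_units_resolve_identity by blast
  have "(\<Sum>i\<in>UNIV. cmod (Y$i$i)) = (\<Sum>j<CARD('n). cmod (Y $ f j $ f j))"
    by (rule sum.reindex_bij_betw[OF f, symmetric])
  also have "\<dots> = (\<Sum>j<CARD('n). N (matrix_unit i0 (f j) ** Y ** cmat_adj (matrix_unit i0 (f j))))"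
    by (simp add: matrix_unit_sandwich N_scale N_matrix_unit_diag)
  also have "\<dots> \<le> N Y"
    by (rule assms[unfolded L_norm_def, rule_format, OF C])
  finally show ?thesis .
qed

lemma Re_trace_unitary_le_N: assumes "L_norm N" "unitary V" shows "Re (trace (cmat_adj V ** X)) \<le> N X"
proof -
  obtain Q d where Q: "unitary Q" "cmat_adj Q ** V ** Q = diag_mat d" "\<forall>i. cmod (d i) = 1"
    using unitary_unitarily_diagonalizable[OF assms(2)] by blast
  have V: "V = Q ** diag_mat d ** cmat_adj Q" using unitary_conj_inverse[OF Q(1,2)] .
  define Y where "Y = cmat_adj Q ** X ** Q"
  have "cmat_adj V = Q ** diag_mat (\<lambda>i. cnj (d i)) ** cmat_adj Q"
    by (simp add: V cmat_adj_mult cmat_adj_diag_mat matrix_mul_assoc)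
  then have "trace (cmat_adj V ** X) = trace (Q ** (diag_mat (\<lambda>i. cnj (d i)) ** (cmat_adj Q ** X)))"
    by (simp add: matrix_mul_assoc)
  also have "\<dots> = trace ((diag_mat (\<lambda>i. cnj (d i)) ** (cmat_adj Q ** X)) ** Q)"
    by (rule trace_mul_sym)
  also have "\<dots> = trace (diag_mat (\<lambda>i. cnj (d i)) ** Y)" by (simp add: Y_def matrix_mul_assoc)
  also have "\<dots> = (\<Sum>i\<in>UNIV. cnj (d i) * Y$i$i)" by (rule trace_diag_mat_mult)
  finally have tr: "trace (cmat_adj V ** X) = (\<Sum>i\<in>UNIV. cnj (d i) * Y$i$i)" .
  have "Re (trace (cmat_adj V ** X)) \<le> cmod (trace (cmat_adj V ** X))" by (rule complex_Re_le_cmod)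
  also have "\<dots> \<le> (\<Sum>i\<in>UNIV. cmod (cnj (d i) * Y$i$i))" unfolding tr by (rule norm_sum)
  also have "\<dots> = (\<Sum>i\<in>UNIV. cmod (Y$i$i))" using Q(3) by (simp add: norm_mult)
  also have "\<dots> \<le> N Y" by (rule sum_cmod_diag_le_N[OF assms(1)])
  also have "\<dots> = N X" unfolding Y_def by (rule N_unitary[OF Q(1)])
  finally show ?thesis .
qed

lemma trace_norm_le_N: assumes Ln: "L_norm N" shows "trace_norm A \<le> N A"
proof -
  obtain Q W s where Q: "unitary Q" and W: "unitary W" and s0: "\<forall>j. 0 \<le> s j"
    and AQ: "A ** Q = W ** diag_mat (\<lambda>j. complex_of_real (s j))"
    using singular_value_decomposition[of A] by blast
  define D where "D = diag_mat (\<lambda>j. complex_of_real (s j))"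
  have abs: "cmat_abs A = Q ** D ** cmat_adj Q" using cmat_abs_svd[OF Q W s0 AQ] by (simp add: D_def)
  have WW: "cmat_adj W ** W = mat 1" using W by (simp add: unitary_def)
  have Aeq: "A = W ** D ** cmat_adj Q" using mult_unitary_eqD[OF Q AQ] by (simp add: D_def)
  define V where "V = W ** cmat_adj Q"
  have uV: "unitary V" using Q W by (simp add: V_def unitary_mult unitary_cmat_adj)
  have "cmat_adj V ** A = Q ** (cmat_adj W ** W) ** D ** cmat_adj Q"
    by (simp add: V_def cmat_adj_mult Aeq matrix_mul_assoc)
  also have "\<dots> = cmat_abs A" by (simp add: WW abs)
  finally have "trace_norm A = Re (trace (cmat_adj V ** A))" by (simp add: trace_norm_def)
  also have "\<dots> \<le> N A" by (rule Re_trace_unitary_le_N[OF Ln uV])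
  finally show ?thesis .
qed

end

theorem proposition2p11:
  fixes N :: "'n::finite cmat \<Rightarrow> real"
  assumes "weakly_unitarily_invariant N"
    and "\<forall>E. rank_one_proj E \<longrightarrow> N E = 1"
  shows "(M_norm N \<longrightarrow> (\<forall>A. num_radius A \<le> N A \<and> N A \<le> op_norm A))
       \<and> (L_norm N \<longrightarrow> (\<forall>A. trace_norm A \<le> N A \<and> N A \<le> num_radius_dual A))"
proof -
  interpret normalized_wui_norm N using assms by unfold_locales
  show ?thesis using num_radius_le_N N_le_op_norm trace_norm_le_N N_le_num_radius_dual by blast
qed

end
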